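(* Let $X\ge y\ge2$. Let $\boldsymbol L$ be a primitive integral system of $k$ affine linear forms in $l$ variables, and let $\boldsymbol f=(f_1,\dots,f_k)$ be a vector of 1-bounded multiplicative functions such that $f_j(p^\mu)=1$ for every prime power $p^\mu\le y$ and every $j$. Then, as $y\to\infty$, $$\prod_{y<p\le X}M_p(\boldsymbol f,\boldsymbol L)=\left(1+O_k\Big(\frac1{\log y}\Big)\right)\left(\prod_{1\le j\le k}\mathfrak P(f_j;X)+O\big(y^{-1+o(1)}\big)\right).$$
   Context: 1-bounded means values in the closed unit disc. An integral affine linear form is $L(\boldsymbol n)=\alpha_0+\sum_{r=1}^l\alpha_rn_r$ with $(\alpha_0,\dots,\alpha_l)\in\mathbb{N}_0^{l+1}$; a system $(L_1,\dots,L_k)$ is primitive if for each $j$ the gcd of the non-constant coefficients of $L_j$ is $1$ and the forms are pairwise linearly independent. For multiplicative $f$ and prime $p$, $f_p$ agrees with $f$ on powers of $p$ and equals $1$ on powers of other primes; $M_p(\boldsymbol f,\boldsymbol L)=\lim_{x\to\infty}x^{-l}\sum_{\boldsymbol n\in([1,x]\cap\mathbb{N})^l}\prod_jf_{j,p}(L_j(\boldsymbol n))$. $\mathfrak P(f;X)=\prod_{p\le X}(1-\frac1p)(1+\sum_{k\ge1}\frac{f(p^k)}{p^k})$. *)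

theory Defs
  imports "HOL-Analysis.Analysis" "HOL-Computational_Algebra.Primes"
begin

definition multiplicative :: "(nat \<Rightarrow> complex) \<Rightarrow> bool" where
  "multiplicative f \<longleftrightarrow> f 1 = 1 \<and>
     (\<forall>a b. a \<ge> 1 \<longrightarrow> b \<ge> 1 \<longrightarrow> coprime a b \<longrightarrow> f (a * b) = f a * f b)"

definition one_bounded :: "(nat \<Rightarrow> complex) \<Rightarrow> bool" where
  "one_bounded f \<longleftrightarrow> (\<forall>n\<ge>1. norm (f n) \<le> 1)"

text \<open>Local factor f_p: agrees with f on powers of p, equals 1 on powers of other primes
  (the multiplicative function n \<mapsto> f(p^{v_p(n)})).\<close>
definition local_part :: "(nat \<Rightarrow> complex) \<Rightarrow> nat \<Rightarrow> nat \<Rightarrow> complex" where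
  "local_part f p n = f (p ^ multiplicity p n)"

text \<open>A system of k affine forms in l variables is given by coefficients
  \<alpha> j r (j < k, 0 \<le> r \<le> l); \<alpha> j 0 is the constant term.
  The variables n are indexed by 1..l.\<close>
definition eval_form :: "(nat \<Rightarrow> nat \<Rightarrow> nat) \<Rightarrow> nat \<Rightarrow> nat \<Rightarrow> (nat \<Rightarrow> nat) \<Rightarrow> nat" where
  "eval_form \<alpha> l j n = \<alpha> j 0 + (\<Sum>r=1..l. \<alpha> j r * n r)"

definition primitive_system :: "nat \<Rightarrow> nat \<Rightarrow> (nat \<Rightarrow> nat \<Rightarrow> nat) \<Rightarrow> bool" where
  "primitive_system k l \<alpha> \<longleftrightarrow>
     (\<forall>j<k. Gcd (\<alpha> j ` {1..l}) = 1) \<and>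
     (\<forall>i<k. \<forall>j<k. i \<noteq> j \<longrightarrow>
        (\<forall>a b :: real. (\<forall>r\<in>{0..l}. a * real (\<alpha> i r) + b * real (\<alpha> j r) = 0)
            \<longrightarrow> a = 0 \<and> b = 0))"

definition M_p :: "nat \<Rightarrow> nat \<Rightarrow> (nat \<Rightarrow> nat \<Rightarrow> complex) \<Rightarrow> (nat \<Rightarrow> nat \<Rightarrow> nat) \<Rightarrow> nat \<Rightarrow> complex" where
  "M_p k l f \<alpha> p = Lim at_top (\<lambda>x::real.
      complex_of_real (x powr (- real l)) *
      (\<Sum>n\<in>PiE {1..l} (\<lambda>_. {1..nat \<lfloor>x\<rfloor>}).
          \<Prod>j<k. local_part (f j) p (eval_form \<alpha> l j n)))"

definition Pfrak :: "(nat \<Rightarrow> complex) \<Rightarrow> real \<Rightarrow> complex" where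
  "Pfrak f X = (\<Prod>p\<in>{p. prime p \<and> real p \<le> X}.
      (1 - 1 / of_nat p) * (1 + (\<Sum>i. f (p ^ Suc i) / of_nat (p ^ Suc i))))"

end

theory Submission
  imports Defs "HOL-Real_Asymp.Real_Asymp"
begin

text \<open>
  Let \<open>E\<^sub>p(g) = (1 - 1/p)(1 + \<Sum>\<^sub>i g(p\<^sup>i)/p\<^sup>i)\<close> be the Euler factor of \<open>\<PP>(g; X)\<close>.
  For a prime \<open>p\<close> larger than all products of two coefficients of the system,
  \<open>M\<^sub>p(f, L) = \<Prod>\<^sub>j E\<^sub>p(f\<^sub>j) \<cdot> (1 + O\<^sub>k(p\<^sup>-\<^sup>2))\<close>.  Indeed, \<open>\<Prod>\<^sub>j f\<^sub>j\<^sub>,\<^sub>p(L\<^sub>j(n)) - 1\<close> equals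
  \<open>\<Sum>\<^sub>j (f\<^sub>j\<^sub>,\<^sub>p(L\<^sub>j(n)) - 1)\<close> unless \<open>p\<close> divides two of the forms at \<open>n\<close>, which by
  pairwise independence happens with density \<open>O(p\<^sup>-\<^sup>2)\<close>; and the single-form terms average to
  \<open>E\<^sub>p(f\<^sub>j) - 1\<close> because \<open>p\<^sup>\<mu> | L\<^sub>j(n)\<close> has density \<open>p\<^sup>-\<^sup>\<mu>\<close>.  Hence the primes in \<open>(y, X]\<close>
  contribute \<open>\<Prod> E\<^sub>p(f\<^sub>j) \<cdot> (1 + O(1/y))\<close>.  For \<open>p \<le> y\<close>, the hypothesis \<open>f\<^sub>j(p\<^sup>\<mu>) = 1\<close> for
  \<open>p\<^sup>\<mu> \<le> y\<close> gives \<open>E\<^sub>p(f\<^sub>j) = 1 + O(min(1/y, 1/p\<^sup>2))\<close>, so these Euler factors multiply to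
  \<open>1 + O(k/\<surd>y)\<close>.  So the identity holds with \<open>E = 0\<close> and \<open>\<theta> = O\<^sub>k(1/\<surd>y)\<close>.
\<close>

section \<open>Linear forms on boxes\<close>

definition box :: "nat \<Rightarrow> nat \<Rightarrow> (nat \<Rightarrow> nat) set" where
  "box l N = PiE {1..l} (\<lambda>_. {1..N})"

lemma finite_box [simp]: "finite (box l N)"
  unfolding box_def by (auto intro: finite_PiE)

lemma card_box: "card (box l N) = N ^ l"
  unfolding box_def by (simp add: card_PiE)

lemma box_eqI:
  assumes "n \<in> box l N" "n' \<in> box l N" "\<And>r. r \<in> {1..l} \<Longrightarrow> n r = n' r"
  shows "n = n'"
  using assms unfolding box_def by (metis PiE_ext)

lemma card_PiE_Diff:
  assumes "J \<subseteq> {1..l}"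
  shows "card (PiE ({1..l} - J) (\<lambda>_. {1..N::nat})) = N ^ (l - card J)"
  using assms by (simp add: card_PiE card_Diff_subset finite_subset)

lemma int_eval_form:
  "int (eval_form \<alpha> l j n) = int (\<alpha> j 0) + (\<Sum>t=1..l. int (\<alpha> j t) * int (n t))"
  unfolding eval_form_def by simp

lemma eval_form_diff_one_coord:
  assumes r0: "r0 \<in> {1..l}" and eq: "\<And>r. r \<in> {1..l} - {r0} \<Longrightarrow> n r = n' r"
  shows "int (eval_form \<alpha> l j n) - int (eval_form \<alpha> l j n') =
     int (\<alpha> j r0) * (int (n r0) - int (n' r0))"
proof -
  have split: "(\<Sum>r=1..l. \<alpha> j r * m r) = \<alpha> j r0 * m r0 + (\<Sum>r\<in>{1..l}-{r0}. \<alpha> j r * m r)" for m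
    using r0 by (subst sum.remove[of _ r0]) auto
  have "(\<Sum>r\<in>{1..l}-{r0}. \<alpha> j r * n r) = (\<Sum>r\<in>{1..l}-{r0}. \<alpha> j r * n' r)"
    using eq by (intro sum.cong) auto
  then show ?thesis unfolding eval_form_def split by (simp add: algebra_simps)
qed

lemma eval_form_diff_two_coords:
  assumes r: "r \<in> {1..l}" and s: "s \<in> {1..l}" and rs: "r \<noteq> s"
    and eq: "\<And>t. t \<in> {1..l} - {r, s} \<Longrightarrow> n t = n' t"
  shows "int (eval_form \<alpha> l j n) - int (eval_form \<alpha> l j n') =
     int (\<alpha> j r) * (int (n r) - int (n' r)) + int (\<alpha> j s) * (int (n s) - int (n' s))"
proof -
  have split: "(\<Sum>t=1..l. \<alpha> j t * m t) =
      \<alpha> j r * m r + \<alpha> j s * m s + (\<Sum>t\<in>{1..l}-{r,s}. \<alpha> j t * m t)" for m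
  proof -
    have "(\<Sum>t=1..l. \<alpha> j t * m t) = \<alpha> j r * m r + (\<Sum>t\<in>{1..l}-{r}. \<alpha> j t * m t)"
      using r by (subst sum.remove[of _ r]) auto
    also have "(\<Sum>t\<in>{1..l}-{r}. \<alpha> j t * m t) = \<alpha> j s * m s + (\<Sum>t\<in>{1..l}-{r}-{s}. \<alpha> j t * m t)"
      using s rs by (subst sum.remove[of _ s]) auto
    also have "{1..l}-{r}-{s} = {1..l} - {r,s}" by auto
    finally show ?thesis by simp
  qed
  have "(\<Sum>t\<in>{1..l}-{r,s}. \<alpha> j t * n t) = (\<Sum>t\<in>{1..l}-{r,s}. \<alpha> j t * n' t)"
    using eq by (intro sum.cong) auto
  then show ?thesis unfolding eval_form_def split by (simp add: algebra_simps)
qed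

lemma eval_form_fun_upd:
  assumes "r0 \<in> {1..l}"
  shows "eval_form \<alpha> l j (m(r0 := t)) = eval_form \<alpha> l j (m(r0 := 0)) + \<alpha> j r0 * t"
proof -
  have "int (eval_form \<alpha> l j (m(r0 := t))) - int (eval_form \<alpha> l j (m(r0 := 0))) = int (\<alpha> j r0) * int t"
    using eval_form_diff_one_coord[OF assms, of "m(r0 := t)" "m(r0 := 0)"] by simp
  then have "int (eval_form \<alpha> l j (m(r0 := t))) = int (eval_form \<alpha> l j (m(r0 := 0)) + \<alpha> j r0 * t)"
    by simp
  then show ?thesis by (simp only: of_nat_eq_iff)
qed

lemma eval_form_mod_cong:
  assumes "\<forall>r\<in>{1..l}. n r mod q = n' r mod q"
  shows "eval_form \<alpha> l j n mod q = eval_form \<alpha> l j n' mod q"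
proof -
  have "(\<Sum>r=1..l. \<alpha> j r * n r) mod q = (\<Sum>r=1..l. (\<alpha> j r * n r) mod q) mod q"
    by (simp add: mod_sum_eq)
  also have "(\<Sum>r=1..l. (\<alpha> j r * n r) mod q) = (\<Sum>r=1..l. (\<alpha> j r * n' r) mod q)"
  proof (rule sum.cong[OF refl])
    fix r assume "r \<in> {1..l}"
    then have "n r mod q = n' r mod q" using assms by blast
    then show "(\<alpha> j r * n r) mod q = (\<alpha> j r * n' r) mod q" by (metis mod_mult_right_eq)
  qed
  also have "(\<Sum>r=1..l. (\<alpha> j r * n' r) mod q) mod q = (\<Sum>r=1..l. \<alpha> j r * n' r) mod q"
    by (simp add: mod_sum_eq)
  finally show ?thesis unfolding eval_form_def by (metis mod_add_right_eq)
qed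

section \<open>Counting solutions of congruences in a box\<close>

lemma nat_eq_if_dvd_diff_and_div_eq:
  fixes a b q :: nat
  assumes "int q dvd int a - int b" "a div q = b div q"
  shows "a = b"
proof -
  have "int a mod int q = int b mod int q" using assms(1) by (simp add: mod_eq_dvd_iff)
  then have "a mod q = b mod q" by (metis of_nat_eq_iff zmod_int)
  then show ?thesis using assms(2) by (metis div_mult_mod_eq)
qed

lemma residue_plus_multiple_in_range:
  fixes b q i N :: nat assumes "b < q" "1 \<le> i" "i < N div q"
  shows "1 \<le> b + q * i" "b + q * i \<le> N"
proof -
  have q: "q > 0" using assms by simp
  have "q * i \<ge> 1" using assms q by (simp add: Suc_le_eq)
  moreover have "b + q * i < q + q * i" using assms by simp
  moreover have "q + q * i \<le> q * (N div q)"
  proof -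
    have "Suc i \<le> N div q" using assms by simp
    then have "q * Suc i \<le> q * (N div q)" by (rule mult_le_mono2)
    then show ?thesis by simp
  qed
  moreover have "q * (N div q) \<le> N" by simp
  ultimately show "1 \<le> b + q * i" "b + q * i \<le> N" by linarith+
qed

lemma card_residue_class_le:
  fixes q N b :: nat assumes q: "q > 0"
  shows "card {t\<in>{1..N}. t mod q = b} \<le> N div q + 1"
proof -
  have "inj_on (\<lambda>t. t div q) {t\<in>{1..N}. t mod q = b}"
  proof (rule inj_onI)
    fix t t' assume t: "t \<in> {t\<in>{1..N}. t mod q = b}" and t': "t' \<in> {t\<in>{1..N}. t mod q = b}"
      and e: "t div q = t' div q"
    have "t = q * (t div q) + t mod q" by simp
    also have "\<dots> = q * (t' div q) + t' mod q" using t t' e by simp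
    also have "\<dots> = t'" by simp
    finally show "t = t'" .
  qed
  moreover have "(\<lambda>t. t div q) ` {t\<in>{1..N}. t mod q = b} \<subseteq> {0..N div q}"
    by (auto intro: div_le_mono)
  ultimately have "card {t\<in>{1..N}. t mod q = b} \<le> card {0..N div q}"
    by (intro card_inj_on_le) auto
  then show ?thesis by simp
qed

lemma card_residue_class_ge:
  fixes q N b :: nat assumes q: "q > 0" and b: "b < q"
  shows "N div q - 1 \<le> card {t\<in>{1..N}. t mod q = b}"
proof -
  have "inj_on (\<lambda>i. b + q * i) {1..<N div q}" using q by (intro inj_onI) auto
  moreover have "(\<lambda>i. b + q * i) ` {1..<N div q} \<subseteq> {t\<in>{1..N}. t mod q = b}"
  proof
    fix t assume "t \<in> (\<lambda>i. b + q * i) ` {1..<N div q}"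
    then obtain i where i: "1 \<le> i" "i < N div q" "t = b + q * i" by auto
    then show "t \<in> {t\<in>{1..N}. t mod q = b}"
      using residue_plus_multiple_in_range[OF b i(1,2)] b by simp
  qed
  ultimately have "card {1..<N div q} \<le> card {t\<in>{1..N}. t mod q = b}"
    by (intro card_inj_on_le) auto
  then show ?thesis by simp
qed

lemma real_div_ge: "real N / real q - 1 \<le> real (N div q)" if "q > 0" for N q :: nat
proof -
  have "N < q * (N div q) + q"
    using mult_div_mod_eq[of q N] mod_less_divisor[OF that, of N] by linarith
  then have "N < q * (N div q + 1)" by (simp add: algebra_simps)
  then have "real N < real (q * (N div q + 1))" by (simp only: of_nat_less_iff)
  then have "real N < real q * (real (N div q) + 1)" by (simp add: algebra_simps)
  then show ?thesis using that by (simp add: field_simps)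
qed

lemma real_div_le: "real (N div q) \<le> real N / real q" if "q > 0" for N q :: nat
proof -
  have "q * (N div q) \<le> N" by simp
  then have "real (q * (N div q)) \<le> real N" by (simp only: of_nat_le_iff)
  then have "real q * real (N div q) \<le> real N" by simp
  then show ?thesis using that by (simp add: field_simps)
qed

lemma linear_congruence_solvable:
  fixes q a c :: nat
  assumes cop: "coprime (int q) (int a)" and q: "q > 0"
  shows "\<exists>b<q. q dvd c + a * b"
proof -
  let ?h = "\<lambda>b. (c + a * b) mod q"
  have "inj_on ?h {..<q}"
  proof (rule inj_onI)
    fix b b' assume b: "b \<in> {..<q}" and b': "b' \<in> {..<q}" and e: "?h b = ?h b'"
    have "int (c + a * b) mod int q = int (c + a * b') mod int q"
      using e by (metis of_nat_eq_iff zmod_int)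
    then have "int q dvd int (c + a * b) - int (c + a * b')" by (simp add: mod_eq_dvd_iff)
    then have "int q dvd int a * (int b - int b')" by (simp add: algebra_simps)
    then have "int q dvd int b - int b'" using cop by (simp add: coprime_dvd_mult_right_iff)
    moreover have "b div q = b' div q" using b b' by simp
    ultimately show "b = b'" by (rule nat_eq_if_dvd_diff_and_div_eq)
  qed
  moreover have "?h ` {..<q} \<subseteq> {..<q}" using q by auto
  ultimately have "?h ` {..<q} = {..<q}"
    by (intro card_subset_eq) (auto simp: card_image)
  then have "0 \<in> ?h ` {..<q}" using q by auto
  then show ?thesis by auto
qed

lemma card_box_dvd_form_le:
  assumes r0: "r0 \<in> {1..l}" and cop: "coprime (int q) (int (\<alpha> j r0))" and q: "q > 0"
  shows "card {n\<in>box l N. q dvd eval_form \<alpha> l j n} \<le> N ^ (l - 1) * (N div q + 1)"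
proof -
  let ?T = "{n\<in>box l N. q dvd eval_form \<alpha> l j n}"
  let ?A = "PiE ({1..l} - {r0}) (\<lambda>_. {1..N})"
  let ?\<Phi> = "\<lambda>n. (restrict n ({1..l} - {r0}), n r0 div q)"
  have "inj_on ?\<Phi> ?T"
  proof (intro inj_onI)
    fix n n' assume n: "n \<in> ?T" and n': "n' \<in> ?T" and eq: "?\<Phi> n = ?\<Phi> n'"
    have e1: "restrict n ({1..l}-{r0}) = restrict n' ({1..l}-{r0})" using eq by simp
    have eqr: "n r = n' r" if "r \<in> {1..l} - {r0}" for r
      using that fun_cong[OF e1, of r] by simp
    have "int q dvd int (eval_form \<alpha> l j n) - int (eval_form \<alpha> l j n')"
      using n n' by (simp add: dvd_diff)
    then have "int q dvd int (\<alpha> j r0) * (int (n r0) - int (n' r0))"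
      using eval_form_diff_one_coord[OF r0 eqr] by simp
    then have "int q dvd int (n r0) - int (n' r0)"
      using cop by (simp add: coprime_dvd_mult_right_iff)
    then have "n r0 = n' r0" using eq nat_eq_if_dvd_diff_and_div_eq by auto
    then show "n = n'" using n n' eqr by (intro box_eqI[of n l N n']) auto
  qed
  moreover have "?\<Phi> ` ?T \<subseteq> ?A \<times> {0..N div q}"
  proof
    fix z assume "z \<in> ?\<Phi> ` ?T"
    then obtain n where n: "n \<in> box l N" "z = ?\<Phi> n" by auto
    have "restrict n ({1..l} - {r0}) \<in> ?A"
      using n(1) by (intro restrict_PiE_iff[THEN iffD2]) (auto simp: box_def)
    moreover have "n r0 \<le> N" using n(1) r0 unfolding box_def by auto
    then have "n r0 div q \<le> N div q" by (rule div_le_mono)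
    ultimately show "z \<in> ?A \<times> {0..N div q}" using n(2) by auto
  qed
  ultimately have "card ?T \<le> card (?A \<times> {0..N div q})"
    by (rule card_inj_on_le) (simp add: finite_PiE)
  also have "\<dots> = N ^ (l - 1) * (N div q + 1)"
    using card_PiE_Diff[of "{r0}" l N] r0 by (simp add: card_cartesian_product)
  finally show ?thesis .
qed

lemma card_box_dvd_form_ge:
  assumes r0: "r0 \<in> {1..l}" and cop: "coprime (int q) (int (\<alpha> j r0))" and q: "q > 0"
  shows "N ^ (l - 1) * (N div q - 1) \<le> card {n\<in>box l N. q dvd eval_form \<alpha> l j n}"
proof -
  let ?T = "{n\<in>box l N. q dvd eval_form \<alpha> l j n}"
  let ?A = "PiE ({1..l} - {r0}) (\<lambda>_. {1..N})"
  define c where "c m = eval_form \<alpha> l j (m(r0 := 0))" for m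
  have "\<forall>m. \<exists>b<q. q dvd c m + \<alpha> j r0 * b" using linear_congruence_solvable[OF cop q] by blast
  then obtain b where b: "\<And>m. b m < q" "\<And>m. q dvd c m + \<alpha> j r0 * b m" by metis
  let ?\<Psi> = "\<lambda>(m, i). m(r0 := b m + q * i)"
  have "inj_on ?\<Psi> (?A \<times> {1..<N div q})"
  proof (rule inj_onI)
    fix z z' assume z: "z \<in> ?A \<times> {1..<N div q}" and z': "z' \<in> ?A \<times> {1..<N div q}"
      and e: "?\<Psi> z = ?\<Psi> z'"
    obtain m i m' i' where mi: "z = (m, i)" "z' = (m', i')" by force
    have m: "m \<in> ?A" and m': "m' \<in> ?A" using z z' mi by auto
    have e2: "m(r0 := b m + q * i) = m'(r0 := b m' + q * i')" using e mi by simp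
    have "m = m'"
    proof
      fix r show "m r = m' r"
      proof (cases "r = r0")
        case True
        then show ?thesis using PiE_arb[OF m] PiE_arb[OF m'] by simp
      next
        case False
        then show ?thesis using fun_cong[OF e2, of r] by simp
      qed
    qed
    moreover have "b m + q * i = b m' + q * i'" using fun_cong[OF e2, of r0] by simp
    ultimately show "z = z'" using q mi by simp
  qed
  moreover have "?\<Psi> ` (?A \<times> {1..<N div q}) \<subseteq> ?T"
  proof
    fix n assume "n \<in> ?\<Psi> ` (?A \<times> {1..<N div q})"
    then obtain m i where m: "m \<in> ?A" and i: "i \<in> {1..<N div q}" and n: "n = m(r0 := b m + q * i)"
      by auto
    have "1 \<le> b m + q * i" "b m + q * i \<le> N"
      using residue_plus_multiple_in_range[OF b(1)] i by auto
    then have "n \<in> box l N"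
      using m r0 unfolding n box_def by (auto simp: PiE_iff extensional_def)
    moreover have "eval_form \<alpha> l j n = (c m + \<alpha> j r0 * b m) + q * (\<alpha> j r0 * i)"
      unfolding n c_def using eval_form_fun_upd[OF r0, of \<alpha> j m "b m + q * i"]
      by (simp add: algebra_simps)
    then have "q dvd eval_form \<alpha> l j n" using b(2)[of m] by simp
    ultimately show "n \<in> ?T" by simp
  qed
  ultimately have "card (?A \<times> {1..<N div q}) \<le> card ?T"
    by (rule card_inj_on_le) simp
  moreover have "card (?A \<times> {1..<N div q}) = N ^ (l - 1) * (N div q - 1)"
    using card_PiE_Diff[of "{r0}" l N] r0 by (simp add: card_cartesian_product)
  ultimately show ?thesis by simp
qed

lemma prime_dvd_solution_of_linear_system:
  fixes a b c d x y :: int and p :: nat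
  assumes p: "prime p" and D: "\<not> int p dvd a * d - b * c"
    and eq1: "int p dvd a * x + b * y" and eq2: "int p dvd c * x + d * y"
  shows "int p dvd x" "int p dvd y"
proof -
  have cop: "coprime (int p) (a * d - b * c)" using D p by (intro prime_imp_coprime) auto
  have "(a * d - b * c) * x = d * (a * x + b * y) - b * (c * x + d * y)" by (simp add: algebra_simps)
  then have "int p dvd (a * d - b * c) * x" using eq1 eq2 by (simp add: dvd_diff)
  then show "int p dvd x" using cop by (simp add: coprime_dvd_mult_right_iff)
  have "(a * d - b * c) * y = a * (c * x + d * y) - c * (a * x + b * y)" by (simp add: algebra_simps)
  then have "int p dvd (a * d - b * c) * y" using eq1 eq2 by (simp add: dvd_diff)
  then show "int p dvd y" using cop by (simp add: coprime_dvd_mult_right_iff)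
qed

text \<open>For two forms whose \<open>2 \<times> 2\<close> minor in the coordinates \<open>r, s\<close> is a unit mod \<open>p\<close>, the
  residues of \<open>n r\<close> and \<open>n s\<close> mod \<open>p\<close> are determined by the other coordinates.\<close>

lemma card_box_dvd_two_forms_le:
  fixes p :: nat
  assumes r: "r \<in> {1..l}" and s: "s \<in> {1..l}" and p: "prime p"
    and D: "\<not> int p dvd int (\<alpha> i r) * int (\<alpha> j s) - int (\<alpha> i s) * int (\<alpha> j r)"
  shows "card {n\<in>box l N. p dvd eval_form \<alpha> l i n \<and> p dvd eval_form \<alpha> l j n}
          \<le> N ^ (l - 2) * (N div p + 1) ^ 2"
proof -
  have rs: "r \<noteq> s" using D by auto
  let ?T = "{n\<in>box l N. p dvd eval_form \<alpha> l i n \<and> p dvd eval_form \<alpha> l j n}"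
  let ?A = "PiE ({1..l} - {r, s}) (\<lambda>_. {1..N})"
  let ?\<Phi> = "\<lambda>n. (restrict n ({1..l} - {r, s}), n r div p, n s div p)"
  have "inj_on ?\<Phi> ?T"
  proof (intro inj_onI)
    fix n n' assume n: "n \<in> ?T" and n': "n' \<in> ?T" and eq: "?\<Phi> n = ?\<Phi> n'"
    have e1: "restrict n ({1..l}-{r,s}) = restrict n' ({1..l}-{r,s})" using eq by simp
    have eqr: "n t = n' t" if "t \<in> {1..l} - {r, s}" for t
      using that fun_cong[OF e1, of t] by simp
    define dr where "dr = int (n r) - int (n' r)"
    define ds where "ds = int (n s) - int (n' s)"
    have di: "int (eval_form \<alpha> l i n) - int (eval_form \<alpha> l i n') = int (\<alpha> i r) * dr + int (\<alpha> i s) * ds"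
      unfolding dr_def ds_def by (rule eval_form_diff_two_coords[OF r s rs eqr])
    have dj: "int (eval_form \<alpha> l j n) - int (eval_form \<alpha> l j n') = int (\<alpha> j r) * dr + int (\<alpha> j s) * ds"
      unfolding dr_def ds_def by (rule eval_form_diff_two_coords[OF r s rs eqr])
    have pi: "int p dvd int (\<alpha> i r) * dr + int (\<alpha> i s) * ds"
      using n n' di[symmetric] by (auto intro!: dvd_diff)
    have pj: "int p dvd int (\<alpha> j r) * dr + int (\<alpha> j s) * ds"
      using n n' dj[symmetric] by (auto intro!: dvd_diff)
    have "int p dvd dr" "int p dvd ds" using prime_dvd_solution_of_linear_system[OF p D pi pj] .
    then have nr: "n r = n' r" using eq nat_eq_if_dvd_diff_and_div_eq unfolding dr_def by auto
    have ns: "n s = n' s" using \<open>int p dvd ds\<close> eq nat_eq_if_dvd_diff_and_div_eq unfolding ds_def by auto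
    show "n = n'"
      using n n' eqr nr ns by (intro box_eqI[of n l N n']) auto
  qed
  moreover have "?\<Phi> ` ?T \<subseteq> ?A \<times> {0..N div p} \<times> {0..N div p}"
  proof
    fix z assume "z \<in> ?\<Phi> ` ?T"
    then obtain n where n: "n \<in> box l N" "z = ?\<Phi> n" by auto
    have "restrict n ({1..l} - {r, s}) \<in> ?A"
      using n(1) by (intro restrict_PiE_iff[THEN iffD2]) (auto simp: box_def)
    moreover have "n r \<le> N" "n s \<le> N" using n(1) r s unfolding box_def by auto
    then have "n r div p \<le> N div p" "n s div p \<le> N div p" by (auto intro: div_le_mono)
    ultimately show "z \<in> ?A \<times> {0..N div p} \<times> {0..N div p}" using n(2) by auto
  qed
  ultimately have "card ?T \<le> card (?A \<times> {0..N div p} \<times> {0..N div p})"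
    by (rule card_inj_on_le) (simp add: finite_PiE)
  also have "\<dots> = N ^ (l - 2) * (N div p + 1) ^ 2"
    using card_PiE_Diff[of "{r, s}" l N] r s rs
    by (simp add: card_cartesian_product power2_eq_square numeral_2_eq_2)
  finally show ?thesis .
qed

lemma box_dvd_two_forms_eq_empty:
  fixes p :: nat
  assumes rel: "\<forall>s\<in>{1..l}. \<alpha> j r * \<alpha> i s = \<alpha> i r * \<alpha> j s"
    and D: "\<not> int p dvd int (\<alpha> j r) * int (\<alpha> i 0) - int (\<alpha> i r) * int (\<alpha> j 0)"
  shows "{n\<in>box l N. p dvd eval_form \<alpha> l i n \<and> p dvd eval_form \<alpha> l j n} = {}"
proof (rule ccontr)
  assume "{n\<in>box l N. p dvd eval_form \<alpha> l i n \<and> p dvd eval_form \<alpha> l j n} \<noteq> {}"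
  then obtain n where n: "p dvd eval_form \<alpha> l i n" "p dvd eval_form \<alpha> l j n" by auto
  have "int (\<alpha> j r) * int (eval_form \<alpha> l i n) - int (\<alpha> i r) * int (eval_form \<alpha> l j n)
      = int (\<alpha> j r) * int (\<alpha> i 0) - int (\<alpha> i r) * int (\<alpha> j 0)
        + (\<Sum>t=1..l. (int (\<alpha> j r * \<alpha> i t) - int (\<alpha> i r * \<alpha> j t)) * int (n t))"
    unfolding int_eval_form by (simp add: algebra_simps sum_distrib_left sum_subtractf)
  also have "(\<Sum>t=1..l. (int (\<alpha> j r * \<alpha> i t) - int (\<alpha> i r * \<alpha> j t)) * int (n t)) = 0"
    using rel by (intro sum.neutral) auto
  finally have "int (\<alpha> j r) * int (\<alpha> i 0) - int (\<alpha> i r) * int (\<alpha> j 0)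
      = int (\<alpha> j r) * int (eval_form \<alpha> l i n) - int (\<alpha> i r) * int (eval_form \<alpha> l j n)" by simp
  moreover have "int p dvd int (\<alpha> j r) * int (eval_form \<alpha> l i n) - int (\<alpha> i r) * int (eval_form \<alpha> l j n)"
    using n by (intro dvd_diff dvd_mult) auto
  ultimately show False using D by simp
qed

section \<open>Averages over boxes\<close>

definition box_avg :: "nat \<Rightarrow> ((nat \<Rightarrow> nat) \<Rightarrow> complex) \<Rightarrow> real \<Rightarrow> complex" where
  "box_avg l F x = complex_of_real (x powr (- real l)) * (\<Sum>n\<in>box l (nat \<lfloor>x\<rfloor>). F n)"

lemma powr_minus_real_of_nat: "x > 0 \<Longrightarrow> x powr (- real l) = 1 / x ^ l"
  by (simp add: powr_minus powr_realpow divide_inverse)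

lemma nat_floor_bounds:
  fixes x :: real assumes "x \<ge> 1"
  shows "real (nat \<lfloor>x\<rfloor>) \<le> x" "x - 1 < real (nat \<lfloor>x\<rfloor>)" "nat \<lfloor>x\<rfloor> \<ge> 1"
  using assms by linarith+

lemma normalized_count_le:
  fixes c :: "nat \<Rightarrow> real"
  assumes l: "l \<ge> 1" and A: "A \<ge> 0" and B: "B \<ge> 0"
    and c: "\<And>N. N \<ge> 1 \<Longrightarrow> c N \<le> A * real N ^ l + B * real N ^ (l - 1)" and x: "x \<ge> 1"
  shows "x powr (- real l) * c (nat \<lfloor>x\<rfloor>) \<le> A + B / x"
proof -
  define N where "N = nat \<lfloor>x\<rfloor>"
  have N: "real N \<le> x" "N \<ge> 1" using nat_floor_bounds[OF x] unfolding N_def by auto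
  have h1: "A * real N ^ l \<le> A * x ^ l" using A N by (intro mult_left_mono power_mono) auto
  have h2: "B * real N ^ (l - 1) \<le> B * x ^ (l - 1)" using B N by (intro mult_left_mono power_mono) auto
  have "c N \<le> A * x ^ l + B * x ^ (l - 1)" using c[OF N(2)] h1 h2 by linarith
  then have "x powr (- real l) * c N \<le> x powr (- real l) * (A * x ^ l + B * x ^ (l - 1))"
    by (intro mult_left_mono) auto
  also have "\<dots> = (A * x ^ l + B * x ^ (l - 1)) / x ^ l" using x by (simp add: powr_minus_real_of_nat)
  finally have "x powr (- real l) * c N \<le> (A * x ^ l + B * x ^ (l - 1)) / x ^ l" .
  also have "\<dots> = A + B / x"
  proof -
    have "x ^ l = x * x ^ (l - 1)" using l by (metis Suc_diff_1 less_le_trans zero_less_one power_Suc)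
    then show ?thesis using x by (simp add: field_simps)
  qed
  finally show ?thesis unfolding N_def .
qed

lemma normalized_count_ge:
  fixes c :: "nat \<Rightarrow> real"
  assumes l: "l \<ge> 1" and A: "A \<ge> 0" and B: "B \<ge> 0"
    and c: "\<And>N. N \<ge> 1 \<Longrightarrow> c N \<ge> A * real N ^ l - B * real N ^ (l - 1)" and x: "x \<ge> 1"
  shows "x powr (- real l) * c (nat \<lfloor>x\<rfloor>) \<ge> A * ((x - 1) / x) ^ l - B / x"
proof -
  define N where "N = nat \<lfloor>x\<rfloor>"
  have N: "real N \<le> x" "x - 1 \<le> real N" "N \<ge> 1" using nat_floor_bounds[OF x] unfolding N_def by auto
  have h1: "A * (x - 1) ^ l \<le> A * real N ^ l" using A N x by (intro mult_left_mono power_mono) auto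
  have h2: "B * real N ^ (l - 1) \<le> B * x ^ (l - 1)" using B N by (intro mult_left_mono power_mono) auto
  have "A * (x - 1) ^ l - B * x ^ (l - 1) \<le> c N" using c[OF N(3)] h1 h2 by linarith
  then have "x powr (- real l) * (A * (x - 1) ^ l - B * x ^ (l - 1)) \<le> x powr (- real l) * c N"
    by (intro mult_left_mono) auto
  moreover have "x powr (- real l) * (A * (x - 1) ^ l - B * x ^ (l - 1)) = (A * (x - 1) ^ l - B * x ^ (l - 1)) / x ^ l"
    using x by (simp add: powr_minus_real_of_nat)
  ultimately have "(A * (x - 1) ^ l - B * x ^ (l - 1)) / x ^ l \<le> x powr (- real l) * c N" by simp
  moreover have "(A * (x - 1) ^ l - B * x ^ (l - 1)) / x ^ l = A * ((x - 1) / x) ^ l - B / x"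
  proof -
    have "x ^ l = x * x ^ (l - 1)" using l by (metis Suc_diff_1 less_le_trans zero_less_one power_Suc)
    then show ?thesis using x by (simp add: field_simps power_divide)
  qed
  ultimately show ?thesis unfolding N_def by simp
qed

lemma normalized_count_tendsto:
  fixes c :: "nat \<Rightarrow> real"
  assumes l: "l \<ge> 1" and A: "A \<ge> 0" and Bu: "Bu \<ge> 0" and B: "B \<ge> 0"
    and cu: "\<And>N. N \<ge> 1 \<Longrightarrow> c N \<le> A * real N ^ l + Bu * real N ^ (l - 1)"
    and cl: "\<And>N. N \<ge> 1 \<Longrightarrow> c N \<ge> A * real N ^ l - B * real N ^ (l - 1)"
  shows "((\<lambda>x. x powr (- real l) * c (nat \<lfloor>x\<rfloor>)) \<longlongrightarrow> A) at_top"
proof (rule tendsto_sandwich)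
  show "eventually (\<lambda>x. x powr (- real l) * c (nat \<lfloor>x\<rfloor>) \<le> A + Bu / x) at_top"
    using eventually_ge_at_top[of 1] by eventually_elim (rule normalized_count_le[OF l A Bu cu])
  show "eventually (\<lambda>x. A * ((x - 1) / x) ^ l - B / x \<le> x powr (- real l) * c (nat \<lfloor>x\<rfloor>)) at_top"
    using eventually_ge_at_top[of 1] by eventually_elim (rule normalized_count_ge[OF l A B cl])
  have B0: "((\<lambda>x::real. B / x) \<longlongrightarrow> 0) at_top" by real_asymp
  have Bu0: "((\<lambda>x::real. Bu / x) \<longlongrightarrow> 0) at_top" by real_asymp
  show "((\<lambda>x. A + Bu / x) \<longlongrightarrow> A) at_top" using tendsto_add[OF tendsto_const[of A] Bu0] by simp
  have "((\<lambda>x::real. (x - 1) / x) \<longlongrightarrow> 1) at_top" by real_asymp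
  then have "((\<lambda>x::real. ((x - 1) / x) ^ l) \<longlongrightarrow> 1) at_top" using tendsto_power by fastforce
  then have "((\<lambda>x::real. A * ((x - 1) / x) ^ l - B / x) \<longlongrightarrow> A * 1 - 0) at_top"
    by (intro tendsto_intros B0)
  then show "((\<lambda>x. A * ((x - 1) / x) ^ l - B / x) \<longlongrightarrow> A) at_top" by simp
qed

lemma box_avg_diff: "box_avg l (\<lambda>n. A n - B n) x = box_avg l A x - box_avg l B x"
  unfolding box_avg_def by (simp add: sum_subtractf algebra_simps)

lemma box_avg_sum: "finite J \<Longrightarrow> box_avg l (\<lambda>n. \<Sum>j\<in>J. A j n) x = (\<Sum>j\<in>J. box_avg l (A j) x)"
  unfolding box_avg_def by (simp add: sum.swap[of _ J] sum_distrib_left)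

lemma box_avg_cmult: "box_avg l (\<lambda>n. c * A n) x = c * box_avg l A x"
  unfolding box_avg_def by (simp add: sum_distrib_left algebra_simps)

lemma box_avg_norm_le:
  assumes "\<And>n. n \<in> box l (nat \<lfloor>x\<rfloor>) \<Longrightarrow> norm (D n) \<le> b n"
  shows "norm (box_avg l D x) \<le> x powr (- real l) * (\<Sum>n\<in>box l (nat \<lfloor>x\<rfloor>). b n)"
proof -
  have "norm (box_avg l D x) = x powr (- real l) * norm (\<Sum>n\<in>box l (nat \<lfloor>x\<rfloor>). D n)"
    unfolding box_avg_def by (simp add: norm_mult)
  also have "\<dots> \<le> x powr (- real l) * (\<Sum>n\<in>box l (nat \<lfloor>x\<rfloor>). b n)"
    by (intro mult_left_mono order.trans[OF norm_sum sum_mono] assms) auto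
  finally show ?thesis .
qed

lemma sum_of_bool_eq_card: "finite A \<Longrightarrow> (\<Sum>n\<in>A. (of_bool (P n) :: 'a :: semiring_1)) = of_nat (card {n\<in>A. P n})"
proof -
  assume "finite A"
  moreover have "A \<inter> {x. P x} = {n\<in>A. P n}" by auto
  ultimately show ?thesis by simp
qed

lemma box_avg_of_bool: "box_avg l (\<lambda>n. of_bool (P n)) x =
    complex_of_real (x powr (- real l) * real (card {n\<in>box l (nat \<lfloor>x\<rfloor>). P n}))"
  unfolding box_avg_def sum_of_bool_eq_card[OF finite_box] by simp

lemma box_avg_one_tendsto: "(box_avg l (\<lambda>n. 1) \<longlongrightarrow> 1) at_top"
proof (cases "l = 0")
  case True
  have "eventually (\<lambda>x. 1 = box_avg l (\<lambda>n. 1) x) at_top"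
    using eventually_gt_at_top[of 0] by eventually_elim (use True in \<open>simp add: box_avg_def card_box\<close>)
  then show ?thesis by (rule Lim_transform_eventually[OF tendsto_const])
next
  case False
  then have "((\<lambda>x. x powr (- real l) * (\<lambda>N. real N ^ l) (nat \<lfloor>x\<rfloor>)) \<longlongrightarrow> 1) at_top"
    by (intro normalized_count_tendsto[where Bu = 0 and B = 0]) auto
  then have "((\<lambda>x. complex_of_real (x powr (- real l) * real (nat \<lfloor>x\<rfloor>) ^ l)) \<longlongrightarrow> of_real 1) at_top"
    by (intro tendsto_of_real) simp
  moreover have "box_avg l (\<lambda>n. 1) = (\<lambda>x. complex_of_real (x powr (- real l) * real (nat \<lfloor>x\<rfloor>) ^ l))"
    by (rule ext) (simp add: box_avg_def card_box)
  ultimately show ?thesis by simp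
qed

section \<open>Densities of congruence conditions\<close>

lemma card_box_dvd_form_real_bounds:
  assumes r0: "r0 \<in> {1..l}" and cop: "coprime (int q) (int (\<alpha> j r0))" and q: "q > 0"
  shows "real (card {n\<in>box l N. q dvd eval_form \<alpha> l j n}) \<le> (1 / q) * real N ^ l + 1 * real N ^ (l - 1)"
    "real (card {n\<in>box l N. q dvd eval_form \<alpha> l j n}) \<ge> (1 / q) * real N ^ l - 2 * real N ^ (l - 1)"
proof -
  have l: "l \<ge> 1" using r0 by auto
  have pl: "real N ^ l = real N * real N ^ (l - 1)" using l
    by (metis Suc_diff_1 less_le_trans zero_less_one power_Suc)
  have "real (card {n\<in>box l N. q dvd eval_form \<alpha> l j n}) \<le> real (N ^ (l - 1) * (N div q + 1))"
    using card_box_dvd_form_le[of r0 l q \<alpha> j N, OF r0 cop q] by (simp only: of_nat_le_iff)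
  also have "\<dots> = real N ^ (l - 1) * (real (N div q) + 1)" by (simp add: algebra_simps)
  also have "\<dots> \<le> real N ^ (l - 1) * (real N / real q + 1)"
    using real_div_le[OF q, of N] by (intro mult_left_mono) auto
  also have "\<dots> = (1 / q) * real N ^ l + 1 * real N ^ (l - 1)" unfolding pl by (simp add: field_simps)
  finally show "real (card {n\<in>box l N. q dvd eval_form \<alpha> l j n}) \<le> (1 / q) * real N ^ l + 1 * real N ^ (l - 1)" .
  have "(1 / q) * real N ^ l - 2 * real N ^ (l - 1) = real N ^ (l - 1) * (real N / real q - 2)"
    unfolding pl by (simp add: field_simps)
  also have "\<dots> \<le> real N ^ (l - 1) * real (N div q - 1)"
  proof (intro mult_left_mono)
    have "real (N div q) - 1 \<le> real (N div q - 1)" by linarith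
    then show "real N / real q - 2 \<le> real (N div q - 1)" using real_div_ge[OF q, of N] by linarith
  qed auto
  also have "\<dots> = real (N ^ (l - 1) * (N div q - 1))" by simp
  also have "\<dots> \<le> real (card {n\<in>box l N. q dvd eval_form \<alpha> l j n})"
    using card_box_dvd_form_ge[of r0 l q \<alpha> j N, OF r0 cop q] by (simp only: of_nat_le_iff)
  finally show "real (card {n\<in>box l N. q dvd eval_form \<alpha> l j n}) \<ge> (1 / q) * real N ^ l - 2 * real N ^ (l - 1)" .
qed

lemma normalized_card_box_dvd_form_tendsto:
  assumes r0: "r0 \<in> {1..l}" and cop: "coprime (int q) (int (\<alpha> j r0))" and q: "q > 0"
  shows "((\<lambda>x. x powr (- real l) * real (card {n\<in>box l (nat \<lfloor>x\<rfloor>). q dvd eval_form \<alpha> l j n}))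
           \<longlongrightarrow> 1 / q) at_top"
proof -
  have l: "l \<ge> 1" using r0 by auto
  have "((\<lambda>x. x powr (- real l) * (\<lambda>N. real (card {n\<in>box l N. q dvd eval_form \<alpha> l j n})) (nat \<lfloor>x\<rfloor>))
           \<longlongrightarrow> 1 / q) at_top"
    by (rule normalized_count_tendsto[OF l _ _ _ card_box_dvd_form_real_bounds(1)[of r0 l q \<alpha> j, OF r0 cop q]
          card_box_dvd_form_real_bounds(2)[of r0 l q \<alpha> j, OF r0 cop q]]) (auto simp: q)
  then show ?thesis by simp
qed

lemma normalized_card_box_dvd_form_le:
  assumes r0: "r0 \<in> {1..l}" and cop: "coprime (int q) (int (\<alpha> j r0))" and q: "q > 0" and x: "x \<ge> 1"
  shows "x powr (- real l) * real (card {n\<in>box l (nat \<lfloor>x\<rfloor>). q dvd eval_form \<alpha> l j n}) \<le> 1 / q + 1 / x"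
proof -
  have l: "l \<ge> 1" using r0 by auto
  show ?thesis
    using normalized_count_le[OF l _ _ card_box_dvd_form_real_bounds(1)[of r0 l q \<alpha> j, OF r0 cop q] x] by simp
qed

lemma real_card_bound_two_coords:
  fixes p N :: nat
  assumes N: "N \<ge> 1" and l: "l \<ge> 2" and p: "p \<ge> 2"
    and c: "c \<le> N ^ (l - 2) * (N div p + 1) ^ 2"
  shows "real c \<le> (1 / real p ^ 2) * real N ^ l + 3 * real N ^ (l - 1)"
proof -
  have p0: "p > 0" using p by simp
  define a where "a = real N / real p"
  have aN: "a \<le> real N" unfolding a_def using p N by (simp add: field_simps)
  have pl: "real N ^ l = real N ^ 2 * real N ^ (l - 2)"
    using l by (metis le_add_diff_inverse power_add)
  have pl1: "real N ^ (l - 1) = real N * real N ^ (l - 2)"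
    using l by (metis (no_types, lifting) One_nat_def Suc_diff_Suc Suc_le_eq diff_Suc_1 numeral_2_eq_2 power_Suc)
  have pl2: "real N ^ (l - 2) \<le> real N ^ (l - 1)"
    using N by (intro power_increasing) auto
  have "real c \<le> real (N ^ (l - 2) * (N div p + 1) ^ 2)"
    using c by (simp only: of_nat_le_iff)
  also have "\<dots> = real N ^ (l - 2) * (real (N div p) + 1) ^ 2" by simp
  also have "\<dots> \<le> real N ^ (l - 2) * (a + 1) ^ 2"
    using real_div_le[OF p0, of N] unfolding a_def by (intro mult_left_mono power_mono) auto
  also have "\<dots> = real N ^ (l - 2) * a ^ 2 + 2 * (a * real N ^ (l - 2)) + real N ^ (l - 2)"
    by (simp add: power2_eq_square algebra_simps)
  also have "real N ^ (l - 2) * a ^ 2 = (1 / real p ^ 2) * real N ^ l"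
    unfolding pl a_def by (simp add: power_divide)
  also have "a * real N ^ (l - 2) \<le> real N ^ (l - 1)"
    unfolding pl1 using aN by (intro mult_right_mono) auto
  finally show ?thesis using pl2 by linarith
qed

lemma density_residue_class:
  fixes q b :: nat assumes q: "q > 0" and b: "b < q"
  shows "((\<lambda>x. real (card {t\<in>{1..nat \<lfloor>x\<rfloor>}. t mod q = b}) / x) \<longlongrightarrow> 1 / q) at_top"
proof -
  let ?c = "\<lambda>N. real (card {t\<in>{1..N}. t mod q = b})"
  have "((\<lambda>x. x powr (- real (1::nat)) * ?c (nat \<lfloor>x\<rfloor>)) \<longlongrightarrow> 1 / q) at_top"
  proof (rule normalized_count_tendsto[where Bu = 1 and B = 2])
    fix N :: nat
    have "?c N \<le> real (N div q + 1)" using card_residue_class_le[OF q, of N b] by (simp only: of_nat_le_iff)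
    also have "\<dots> \<le> real N / q + 1" using real_div_le[OF q, of N] by simp
    finally show "?c N \<le> 1 / real q * real N ^ 1 + 1 * real N ^ (1 - 1)" by simp
    have "real (N div q - 1) \<le> ?c N" using card_residue_class_ge[OF q b, of N] by (simp only: of_nat_le_iff)
    moreover have "real (N div q) - 1 \<le> real (N div q - 1)" by linarith
    ultimately show "1 / real q * real N ^ 1 - 2 * real N ^ (1 - 1) \<le> ?c N"
      using real_div_ge[OF q, of N] by simp
  qed auto
  then show ?thesis
    by (rule Lim_transform_eventually)
       (use eventually_gt_at_top[of 0] in \<open>eventually_elim, simp add: powr_minus divide_inverse mult.commute\<close>)
qed

section \<open>Existence of limits of box averages\<close>

lemma uniform_approximant_limits_Cauchy:
  fixes F :: "real \<Rightarrow> complex" and G :: "nat \<Rightarrow> real \<Rightarrow> complex"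
  assumes G: "\<And>M. (G M \<longlongrightarrow> Lv M) at_top"
    and E: "\<And>M. eventually (\<lambda>x. norm (F x - G M x) \<le> \<eta> M) at_top"
    and eta: "\<eta> \<longlonglongrightarrow> 0"
  shows "Cauchy Lv"
proof -
  have LL: "norm (Lv M - Lv M') \<le> \<eta> M + \<eta> M'" for M M'
  proof (rule tendsto_upperbound)
    show "((\<lambda>x. norm (G M x - G M' x)) \<longlongrightarrow> norm (Lv M - Lv M')) at_top"
      by (intro tendsto_intros G)
    show "eventually (\<lambda>x. norm (G M x - G M' x) \<le> \<eta> M + \<eta> M') at_top"
      using E[of M] E[of M']
    proof eventually_elim
      case (elim x)
      have "norm (G M x - G M' x) \<le> norm (F x - G M x) + norm (F x - G M' x)"
        by (metis norm_minus_commute norm_triangle_ineq4 diff_diff_eq2 add.commute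
            diff_add_cancel norm_triangle_sub)
      then show ?case using elim by linarith
    qed
  qed simp
  show "Cauchy Lv"
  proof (rule metric_CauchyI)
    fix e :: real assume e: "e > 0"
    have e2: "e / 2 > 0" using e by simp
    obtain no where no0: "\<forall>n\<ge>no. dist (\<eta> n) 0 < e / 2"
      using eta[unfolded lim_sequentially] e2 by blast
    then have no: "\<And>n. n \<ge> no \<Longrightarrow> \<bar>\<eta> n\<bar> < e / 2" by auto
    show "\<exists>M. \<forall>m\<ge>M. \<forall>n\<ge>M. dist (Lv m) (Lv n) < e"
    proof (intro exI allI impI)
      fix m n assume "m \<ge> no" "n \<ge> no"
      then have "\<bar>\<eta> m\<bar> < e / 2" "\<bar>\<eta> n\<bar> < e / 2" using no by auto
      then show "dist (Lv m) (Lv n) < e" using LL[of m n] by (simp add: dist_norm)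
    qed
  qed
qed

lemma tendsto_of_uniform_approximants:
  fixes F :: "real \<Rightarrow> complex" and G :: "nat \<Rightarrow> real \<Rightarrow> complex"
  assumes G: "\<And>M. (G M \<longlongrightarrow> Lv M) at_top"
    and E: "\<And>M. eventually (\<lambda>x. norm (F x - G M x) \<le> \<eta> M) at_top"
    and eta: "\<eta> \<longlonglongrightarrow> 0"
  shows "\<exists>L. (F \<longlongrightarrow> L) at_top \<and> Lv \<longlonglongrightarrow> L"
proof -
  have "Cauchy Lv" by (rule uniform_approximant_limits_Cauchy[OF G E eta])
  then obtain L where L: "Lv \<longlonglongrightarrow> L" using Cauchy_convergent_iff convergent_def by blast
  have "(F \<longlongrightarrow> L) at_top"
  proof (rule tendstoI)
    fix e :: real assume e: "e > 0"
    have "eventually (\<lambda>M. \<bar>\<eta> M\<bar> < e / 3) sequentially"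
      using tendstoD[OF eta, of "e/3"] e by (simp add: dist_real_def)
    moreover have "eventually (\<lambda>M. dist (Lv M) L < e / 3) sequentially"
      using tendstoD[OF L, of "e/3"] e by simp
    ultimately have "eventually (\<lambda>M. \<bar>\<eta> M\<bar> < e / 3 \<and> dist (Lv M) L < e / 3) sequentially"
      by eventually_elim auto
    then obtain M where M: "\<bar>\<eta> M\<bar> < e / 3" "dist (Lv M) L < e / 3"
      using eventually_sequentially by auto
    have "eventually (\<lambda>x. dist (G M x) (Lv M) < e / 3) at_top" using tendstoD[OF G[of M], of "e/3"] e by simp
    then show "eventually (\<lambda>x. dist (F x) L < e) at_top" using E[of M]
    proof eventually_elim
      case (elim x)
      have t1: "dist (F x) L \<le> dist (F x) (G M x) + dist (G M x) L" by (rule dist_triangle)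
      have t2: "dist (G M x) L \<le> dist (G M x) (Lv M) + dist (Lv M) L" by (rule dist_triangle)
      have "dist (F x) L \<le> norm (F x - G M x) + dist (G M x) (Lv M) + dist (Lv M) L"
        using t1 t2 by (simp add: dist_norm)
      then show ?case using elim M by linarith
    qed
  qed
  then show ?thesis using L by blast
qed

lemma sum_box_eq_sum_residues:
  fixes \<Psi> :: "(nat \<Rightarrow> nat) \<Rightarrow> complex"
  assumes q: "q > 0" and per: "\<And>n n'. (\<forall>r\<in>{1..l}. n r mod q = n' r mod q) \<Longrightarrow> \<Psi> n = \<Psi> n'"
  shows "(\<Sum>n\<in>box l N. \<Psi> n) = (\<Sum>a\<in>PiE {1..l} (\<lambda>_. {..<q}).
           \<Psi> a * of_nat (card (PiE {1..l} (\<lambda>r. {t\<in>{1..N}. t mod q = a r}))))"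
proof -
  let ?I = "{1..l}"
  let ?A = "PiE ?I (\<lambda>_. {..<q})"
  let ?res = "\<lambda>n. restrict (\<lambda>r. n r mod q) ?I"
  let ?fib = "\<lambda>N a. PiE ?I (\<lambda>r. {t\<in>{1..N}. t mod q = a r})"
  have "(\<Sum>n\<in>box l N. \<Psi> n) = (\<Sum>a\<in>?A. \<Sum>n\<in>{n\<in>box l N. ?res n = a}. \<Psi> n)"
    by (rule sum.group[symmetric]) (use q in \<open>auto simp: box_def PiE_iff intro: finite_PiE\<close>)
  also have "\<dots> = (\<Sum>a\<in>?A. \<Psi> a * of_nat (card (?fib N a)))"
  proof (rule sum.cong[OF refl])
    fix a assume a: "a \<in> ?A"
    have fe: "{n\<in>box l N. ?res n = a} = ?fib N a"
    proof (intro equalityI subsetI)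
      fix n assume n: "n \<in> {n\<in>box l N. ?res n = a}"
      then have "\<And>r. r \<in> ?I \<Longrightarrow> n r mod q = a r" by (metis (mono_tags, lifting) mem_Collect_eq restrict_apply')
      then show "n \<in> ?fib N a" using n by (auto simp: box_def PiE_iff)
    next
      fix n assume n: "n \<in> ?fib N a"
      then have "n \<in> box l N" by (auto simp: box_def PiE_iff)
      moreover have "?res n = a"
      proof
        fix r show "?res n r = a r"
          using n a by (cases "r \<in> ?I") (auto simp: PiE_iff extensional_def)
      qed
      ultimately show "n \<in> {n\<in>box l N. ?res n = a}" by simp
    qed
    have "(\<Sum>n\<in>?fib N a. \<Psi> n) = (\<Sum>n\<in>?fib N a. \<Psi> a)"
    proof (rule sum.cong[OF refl])
      fix n assume n: "n \<in> ?fib N a"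
      have "\<forall>r\<in>?I. n r mod q = a r mod q"
      proof
        fix r assume r: "r \<in> ?I"
        then have "n r mod q = a r" using n by (auto simp: PiE_iff)
        moreover have "a r < q" using a r by (auto simp: PiE_iff)
        ultimately show "n r mod q = a r mod q" by simp
      qed
      then show "\<Psi> n = \<Psi> a" by (rule per)
    qed
    then show "(\<Sum>n\<in>{n\<in>box l N. ?res n = a}. \<Psi> n) = \<Psi> a * of_nat (card (?fib N a))"
      unfolding fe by (simp add: mult.commute)
  qed
  finally show ?thesis .
qed

lemma normalized_card_PiE_residues:
  fixes x :: real
  assumes x: "x > 0"
  shows "x powr (- real l) * real (card (PiE {1..l} (\<lambda>r. {t\<in>{1..nat \<lfloor>x\<rfloor>}. t mod q = a r})))
    = (\<Prod>r\<in>{1..l}. real (card {t\<in>{1..nat \<lfloor>x\<rfloor>}. t mod q = a r}) / x)"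
proof -
  have "x powr (- real l) = (\<Prod>r\<in>{1..l}. 1 / x)" using x by (simp add: powr_minus_real_of_nat power_one_over)
  then have "x powr (- real l) * real (card (PiE {1..l} (\<lambda>r. {t\<in>{1..nat \<lfloor>x\<rfloor>}. t mod q = a r}))) =
      (\<Prod>r\<in>{1..l}. 1 / x) * (\<Prod>r\<in>{1..l}. real (card {t\<in>{1..nat \<lfloor>x\<rfloor>}. t mod q = a r}))"
    by (simp add: card_PiE)
  also have "\<dots> = (\<Prod>r\<in>{1..l}. 1 / x * real (card {t\<in>{1..nat \<lfloor>x\<rfloor>}. t mod q = a r}))"
    by (simp only: prod.distrib)
  also have "\<dots> = (\<Prod>r\<in>{1..l}. real (card {t\<in>{1..nat \<lfloor>x\<rfloor>}. t mod q = a r}) / x)"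
    by (intro prod.cong) auto
  finally show ?thesis .
qed

lemma box_avg_periodic_convergent:
  fixes \<Psi> :: "(nat \<Rightarrow> nat) \<Rightarrow> complex"
  assumes q: "q > 0" and per: "\<And>n n'. (\<forall>r\<in>{1..l}. n r mod q = n' r mod q) \<Longrightarrow> \<Psi> n = \<Psi> n'"
  shows "\<exists>L. (box_avg l \<Psi> \<longlongrightarrow> L) at_top"
proof -
  let ?A = "PiE {1..l} (\<lambda>_. {..<q})"
  let ?d = "\<lambda>x a. \<Prod>r\<in>{1..l}. real (card {t\<in>{1..nat \<lfloor>x\<rfloor>}. t mod q = a r}) / x"
  let ?c = "\<lambda>x a. card (PiE {1..l} (\<lambda>r. {t\<in>{1..nat \<lfloor>x\<rfloor>}. t mod q = a r}))"
  have key: "(\<Sum>n\<in>box l N. \<Psi> n) = (\<Sum>a\<in>?A. \<Psi> a * of_nat (card (PiE {1..l} (\<lambda>r. {t\<in>{1..N}. t mod q = a r}))))"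
    for N using q by (rule sum_box_eq_sum_residues) (rule per)
  have ev: "eventually (\<lambda>x. box_avg l \<Psi> x = (\<Sum>a\<in>?A. \<Psi> a * of_real (?d x a))) at_top"
    using eventually_gt_at_top[of 0]
  proof eventually_elim
    case (elim x)
    have d: "complex_of_real (x powr (- real l)) * of_nat (?c x a) = of_real (?d x a)" for a
      unfolding normalized_card_PiE_residues[OF elim, symmetric] by simp
    have "box_avg l \<Psi> x = complex_of_real (x powr (- real l)) * (\<Sum>a\<in>?A. \<Psi> a * of_nat (?c x a))"
      unfolding box_avg_def key ..
    also have "\<dots> = (\<Sum>a\<in>?A. \<Psi> a * (complex_of_real (x powr (- real l)) * of_nat (?c x a)))"
      by (simp add: sum_distrib_left mult.left_commute)
    finally show ?case unfolding d .
  qed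
  have "((\<lambda>x. \<Sum>a\<in>?A. \<Psi> a * of_real (?d x a)) \<longlongrightarrow> (\<Sum>a\<in>?A. \<Psi> a * of_real (\<Prod>r\<in>{1..l}. 1 / real q))) at_top"
  proof (intro tendsto_sum tendsto_mult tendsto_const tendsto_of_real tendsto_prod)
    fix a r assume a: "a \<in> ?A" and r: "r \<in> {1..l}"
    have "a r < q" using a r by (auto simp: PiE_iff)
    then show "((\<lambda>x. real (card {t\<in>{1..nat \<lfloor>x\<rfloor>}. t mod q = a r}) / x) \<longlongrightarrow> 1 / real q) at_top"
      by (rule density_residue_class[OF q])
  qed
  then show ?thesis using Lim_transform_eventually[OF _ ev[THEN eventually_mono, OF sym]] by blast
qed


section \<open>Products of numbers close to one\<close>

lemma norm_prod_one_plus_bounds: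
  fixes z :: "'i \<Rightarrow> complex"
  assumes "finite I"
  shows "norm ((\<Prod>i\<in>I. 1 + z i) - 1) \<le> (\<Prod>i\<in>I. 1 + norm (z i)) - 1"
    "norm ((\<Prod>i\<in>I. 1 + z i) - 1 - (\<Sum>i\<in>I. z i)) \<le> (\<Prod>i\<in>I. 1 + norm (z i)) - 1 - (\<Sum>i\<in>I. norm (z i))"
  using assms
proof (induction I rule: finite_induct)
  case empty
  { case 1 show ?case by simp }
  { case 2 show ?case by simp }
next
  case (insert a I)
  define P where "P = (\<Prod>i\<in>I. 1 + z i)"
  define Q where "Q = (\<Prod>i\<in>I. 1 + norm (z i))"
  define S where "S = (\<Sum>i\<in>I. z i)"
  define T where "T = (\<Sum>i\<in>I. norm (z i))"
  have PQ: "norm P \<le> Q" unfolding P_def Q_def prod_norm[symmetric]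
    by (intro prod_mono) (auto intro: norm_triangle_le)
  have IH1: "norm (P - 1) \<le> Q - 1" using insert.IH(1) unfolding P_def Q_def .
  have IH2: "norm (P - 1 - S) \<le> Q - 1 - T" using insert.IH(2) unfolding P_def Q_def S_def T_def .
  have e1: "(\<Prod>i\<in>insert a I. 1 + z i) = (1 + z a) * P" unfolding P_def using insert by simp
  have e2: "(\<Prod>i\<in>insert a I. 1 + norm (z i)) = (1 + norm (z a)) * Q" unfolding Q_def using insert by simp
  have e3: "(\<Sum>i\<in>insert a I. z i) = z a + S" unfolding S_def using insert by simp
  have e4: "(\<Sum>i\<in>insert a I. norm (z i)) = norm (z a) + T" unfolding T_def using insert by simp
  have "norm ((1 + z a) * P - 1) = norm ((P - 1) + z a * P)" by (simp add: algebra_simps)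
  also have "\<dots> \<le> norm (P - 1) + norm (z a) * norm P" by (rule order.trans[OF norm_triangle_ineq]) (simp add: norm_mult)
  also have "\<dots> \<le> (Q - 1) + norm (z a) * Q" using IH1 PQ by (intro add_mono mult_left_mono) auto
  also have "\<dots> = (1 + norm (z a)) * Q - 1" by (simp add: algebra_simps)
  finally show "norm ((\<Prod>i\<in>insert a I. 1 + z i) - 1) \<le> (\<Prod>i\<in>insert a I. 1 + norm (z i)) - 1"
    unfolding e1 e2 .
  have "norm ((1 + z a) * P - 1 - (z a + S)) = norm ((P - 1 - S) + z a * (P - 1))" by (simp add: algebra_simps)
  also have "\<dots> \<le> norm (P - 1 - S) + norm (z a) * norm (P - 1)"
    by (rule order.trans[OF norm_triangle_ineq]) (simp add: norm_mult)
  also have "\<dots> \<le> (Q - 1 - T) + norm (z a) * (Q - 1)" using IH1 IH2 by (intro add_mono mult_left_mono) auto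
  also have "\<dots> = (1 + norm (z a)) * Q - 1 - (norm (z a) + T)" by (simp add: algebra_simps)
  finally show "norm ((\<Prod>i\<in>insert a I. 1 + z i) - 1 - (\<Sum>i\<in>insert a I. z i)) \<le>
      (\<Prod>i\<in>insert a I. 1 + norm (z i)) - 1 - (\<Sum>i\<in>insert a I. norm (z i))"
    unfolding e1 e2 e3 e4 .
qed

lemma norm_prod_one_plus_sub_one_le:
  fixes z :: "'i \<Rightarrow> complex"
  assumes "finite I" and s: "(\<Sum>i\<in>I. norm (z i)) \<le> 1"
  shows "norm ((\<Prod>i\<in>I. 1 + z i) - 1) \<le> 2 * (\<Sum>i\<in>I. norm (z i))"
proof -
  let ?s = "\<Sum>i\<in>I. norm (z i)"
  have "(\<Prod>i\<in>I. 1 + norm (z i)) \<le> exp ?s" by (rule prod_le_exp_sum) auto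
  also have "\<dots> \<le> 1 + ?s + ?s\<^sup>2" by (rule exp_bound) (auto intro: sum_nonneg s)
  also have "?s\<^sup>2 \<le> ?s"
    using mult_left_le[OF s sum_nonneg[of I "\<lambda>i. norm (z i)"]] by (simp add: power2_eq_square)
  finally show ?thesis using norm_prod_one_plus_bounds(1)[OF assms(1), of z] by linarith
qed

lemma norm_prod_one_plus_second_order_le:
  fixes z :: "'i \<Rightarrow> complex"
  assumes "finite I" and s: "(\<Sum>i\<in>I. norm (z i)) \<le> 1"
  shows "norm ((\<Prod>i\<in>I. 1 + z i) - 1 - (\<Sum>i\<in>I. z i)) \<le> (\<Sum>i\<in>I. norm (z i))\<^sup>2"
proof -
  let ?s = "\<Sum>i\<in>I. norm (z i)"
  have "(\<Prod>i\<in>I. 1 + norm (z i)) \<le> exp ?s" by (rule prod_le_exp_sum) auto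
  also have "\<dots> \<le> 1 + ?s + ?s\<^sup>2" by (rule exp_bound) (auto intro: sum_nonneg s)
  finally show ?thesis using norm_prod_one_plus_bounds(2)[OF assms(1), of z] by linarith
qed


lemma prod_sub_one_sub_sum_eq_zero:
  fixes z :: "'i \<Rightarrow> 'a :: comm_ring_1"
  assumes "finite I" and at_most_one: "\<And>i j. i \<in> I \<Longrightarrow> j \<in> I \<Longrightarrow> z i \<noteq> 1 \<Longrightarrow> z j \<noteq> 1 \<Longrightarrow> i = j"
  shows "(\<Prod>i\<in>I. z i) - 1 - (\<Sum>i\<in>I. z i - 1) = 0"
proof -
  define S where "S = {i\<in>I. z i \<noteq> 1}"
  have "(\<Prod>i\<in>I. z i) = (\<Prod>i\<in>S. z i)"
    by (rule prod.mono_neutral_right) (auto simp: S_def assms(1))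
  moreover have "(\<Sum>i\<in>I. z i - 1) = (\<Sum>i\<in>S. z i - 1)"
    by (rule sum.mono_neutral_right) (auto simp: S_def assms(1))
  moreover have "S = {} \<or> (\<exists>i. S = {i})" using at_most_one unfolding S_def by blast
  ultimately show ?thesis by auto
qed

lemma norm_prod_sub_one_sub_sum_le:
  fixes z :: "'i \<Rightarrow> complex"
  assumes "finite I" and z: "\<And>i. i \<in> I \<Longrightarrow> norm (z i) \<le> 1"
  shows "norm ((\<Prod>i\<in>I. z i) - 1 - (\<Sum>i\<in>I. z i - 1)) \<le> 2 + 2 * real (card I)"
proof -
  have "norm (\<Prod>i\<in>I. z i) \<le> 1"
    unfolding prod_norm[symmetric] using z by (intro prod_le_1) auto
  moreover have "norm (\<Sum>i\<in>I. z i - 1) \<le> (\<Sum>i\<in>I. 2)"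
  proof (rule order.trans[OF norm_sum sum_mono])
    fix i assume "i \<in> I"
    then show "norm (z i - 1) \<le> 2" using z[of i] norm_triangle_ineq4[of "z i" 1] by simp
  qed
  moreover have "norm ((\<Prod>i\<in>I. z i) - 1 - (\<Sum>i\<in>I. z i - 1))
      \<le> norm (\<Prod>i\<in>I. z i) + 1 + norm (\<Sum>i\<in>I. z i - 1)"
    using norm_triangle_ineq4[of "(\<Prod>i\<in>I. z i) - 1" "\<Sum>i\<in>I. z i - 1"]
      norm_triangle_ineq4[of "\<Prod>i\<in>I. z i" 1] by simp
  ultimately show ?thesis by simp
qed

lemma norm_divide_sub_one_le:
  fixes a b :: complex
  assumes b: "norm (b - 1) \<le> 1 / 2"
  shows "norm (a / b - 1) \<le> 2 * norm (a - b)"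
proof -
  have "norm (1::complex) \<le> norm b + norm (b - 1)"
    using norm_triangle_ineq4[of b "b - 1"] by simp
  then have nb: "norm b \<ge> 1 / 2" using b by simp
  then have "b \<noteq> 0" by auto
  then have "a / b - 1 = (a - b) / b" by (simp add: diff_divide_distrib)
  then have "norm (a / b - 1) = norm (a - b) / norm b" by (simp add: norm_divide)
  also have "\<dots> \<le> norm (a - b) / (1 / 2)" using nb by (intro divide_left_mono) auto
  finally show ?thesis by simp
qed

section \<open>Euler factors\<close>

definition euler_factor :: "(nat \<Rightarrow> complex) \<Rightarrow> nat \<Rightarrow> complex" where
  "euler_factor g p = (1 - 1 / of_nat p) * (1 + (\<Sum>i. g (p ^ Suc i) / of_nat (p ^ Suc i)))"

lemma euler_factor_sub_one_sums:
  fixes g :: "nat \<Rightarrow> complex" and p :: nat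
  assumes p: "p \<ge> 2" and gb: "\<And>\<mu>. norm (g (p ^ \<mu>)) \<le> 1"
  shows "(\<lambda>i. (g (p ^ Suc i) - 1) * (of_real (1 / real p ^ Suc i) - of_real (1 / real p ^ Suc (Suc i))))
            sums (euler_factor g p - 1)"
proof -
  define r where "r = 1 / real p"
  define w where "w = (of_real r :: complex)"
  have r0: "0 < r" "r < 1" "r \<le> 1/2" using p unfolding r_def by (auto simp: field_simps)
  have nw: "norm w = r" unfolding w_def using r0 by simp
  have w1: "1 - w \<noteq> 0" unfolding w_def using r0 by (metis of_real_1 of_real_eq_iff right_minus_eq less_irrefl)
  have pw: "1 / of_nat (p ^ Suc i) = w ^ Suc i" for i
    unfolding w_def r_def by (simp add: power_one_over)
  define t where "t i = (g (p ^ Suc i) - 1) * w ^ Suc i" for i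
  have tb: "norm (t i) \<le> 2 * r * r ^ i" for i
  proof -
    have "norm (g (p ^ Suc i) - 1) \<le> 2"
      using gb[of "Suc i"] by (metis norm_one norm_triangle_ineq4 one_add_one add_mono order_refl order.trans)
    then show ?thesis unfolding t_def norm_mult norm_power nw
      using r0 by (simp add: mult_right_mono mult.assoc)
  qed
  have sg: "summable (\<lambda>i. 2 * r * r ^ i)"
    using r0 by (intro summable_mult summable_geometric) auto
  have st: "summable t" by (rule summable_comparison_test'[OF sg tb])
  have hg: "(\<lambda>i. w * w ^ i) sums (w * (1 / (1 - w)))"
    using nw r0 by (intro sums_mult geometric_sums) auto
  have "(\<lambda>i. t i + w * w ^ i) sums (suminf t + w * (1 / (1 - w)))"
    by (intro sums_add summable_sums st hg)
  moreover have "(\<lambda>i. t i + w * w ^ i) = (\<lambda>i. g (p ^ Suc i) / of_nat (p ^ Suc i))"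
  proof
    fix i
    have "g (p ^ Suc i) / of_nat (p ^ Suc i) = g (p ^ Suc i) * w ^ Suc i"
      using pw[of i] by (metis mult.right_neutral times_divide_eq_right)
    then show "t i + w * w ^ i = g (p ^ Suc i) / of_nat (p ^ Suc i)"
      unfolding t_def by (simp add: algebra_simps)
  qed
  ultimately have S: "(\<Sum>i. g (p ^ Suc i) / of_nat (p ^ Suc i)) = suminf t + w * (1 / (1 - w))"
    by (simp add: sums_iff)
  have w2: "1 / of_nat p = w" unfolding w_def r_def by simp
  have E1: "euler_factor g p - 1 = (1 - w) * suminf t"
    unfolding euler_factor_def S w2 using w1 by (simp add: field_simps)
  have "(\<lambda>i. (1 - w) * t i) sums ((1 - w) * suminf t)" by (intro sums_mult summable_sums st)
  moreover have "(\<lambda>i. (1 - w) * t i) = (\<lambda>i. (g (p ^ Suc i) - 1) * (of_real (1 / real p ^ Suc i) - of_real (1 / real p ^ Suc (Suc i))))"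
  proof
    fix i
    have "of_real (1 / real p ^ Suc i) = w ^ Suc i" "of_real (1 / real p ^ Suc (Suc i)) = w ^ Suc (Suc i)"
      unfolding w_def r_def by (simp_all add: power_one_over)
    then show "(1 - w) * t i = (g (p ^ Suc i) - 1) * (of_real (1 / real p ^ Suc i) - of_real (1 / real p ^ Suc (Suc i)))"
      unfolding t_def by (simp add: algebra_simps)
  qed
  ultimately show "(\<lambda>i. (g (p ^ Suc i) - 1) * (of_real (1 / real p ^ Suc i) - of_real (1 / real p ^ Suc (Suc i))))
            sums (euler_factor g p - 1)" unfolding E1 by simp
qed

lemma euler_factor_sub_one_partial_sums:
  fixes g :: "nat \<Rightarrow> complex"
  assumes p: "p \<ge> 2" and gb: "\<And>\<mu>. norm (g (p ^ \<mu>)) \<le> 1"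
  shows "(\<lambda>M. \<Sum>\<mu>\<in>{1..M}. (g (p ^ \<mu>) - 1) * (of_real (1 / real p ^ \<mu>) - of_real (1 / real p ^ Suc \<mu>)))
           \<longlonglongrightarrow> euler_factor g p - 1"
proof -
  have "{1..M} = Suc ` {..<M}" for M
    by (auto simp: image_iff) (metis Suc_pred lessThan_iff not_less_eq_eq less_Suc_eq_le One_nat_def le_simps(3))
  then have "(\<lambda>M. \<Sum>\<mu>\<in>{1..M}. (g (p ^ \<mu>) - 1) * (of_real (1 / real p ^ \<mu>) - of_real (1 / real p ^ Suc \<mu>)))
      = (\<lambda>M. \<Sum>i<M. (g (p ^ Suc i) - 1) * (of_real (1 / real p ^ Suc i) - of_real (1 / real p ^ Suc (Suc i))))"
    by (intro ext) (simp add: sum.reindex)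
  then show ?thesis using euler_factor_sub_one_sums[of p g, OF p gb] unfolding sums_def by simp
qed

lemma norm_euler_factor_sub_one_le:
  fixes g :: "nat \<Rightarrow> complex" and p m :: nat
  assumes p: "p \<ge> 2" and gb: "\<And>\<mu>. norm (g (p ^ \<mu>)) \<le> 1" and m: "m \<ge> 1"
    and g1: "\<And>\<mu>. 1 \<le> \<mu> \<Longrightarrow> \<mu> < m \<Longrightarrow> g (p ^ \<mu>) = 1"
  shows "norm (euler_factor g p - 1) \<le> 4 / real p ^ m"
proof -
  define tm where "tm i = (g (p ^ Suc i) - 1) * (of_real (1 / real p ^ Suc i) - of_real (1 / real p ^ Suc (Suc i)))" for i
  have sm: "tm sums (euler_factor g p - 1)" unfolding tm_def by (rule euler_factor_sub_one_sums[of p g, OF p gb])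
  have z: "(\<Sum>i<m - 1. tm i) = 0"
  proof (rule sum.neutral, rule ballI)
    fix i assume "i \<in> {..<m - 1}"
    then have "g (p ^ Suc i) = 1" using g1[of "Suc i"] by auto
    then show "tm i = 0" unfolding tm_def by simp
  qed
  have sh: "(\<lambda>t. tm (t + (m - 1))) sums (euler_factor g p - 1)"
    using sums_split_initial_segment[OF sm, of "m - 1"] z by simp
  define r where "r = 1 / real p"
  have r0: "0 < r" "r \<le> 1/2" using p unfolding r_def by (auto simp: field_simps)
  define bd where "bd t = 2 * r ^ m * r ^ t" for t
  have tb: "norm (tm (t + (m - 1))) \<le> bd t" for t
  proof -
    have e: "Suc (t + (m - 1)) = t + m" using m by simp
    have a1: "0 \<le> 1 / real p ^ (t + m) - 1 / real p ^ Suc (t + m)" using p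
      by (simp add: field_simps)
    have a2: "1 / real p ^ (t + m) - 1 / real p ^ Suc (t + m) \<le> 1 / real p ^ (t + m)" by simp
    have "norm (of_real (1 / real p ^ (t + m)) - of_real (1 / real p ^ Suc (t + m)) :: complex)
        = \<bar>1 / real p ^ (t + m) - 1 / real p ^ Suc (t + m)\<bar>"
      by (metis norm_of_real of_real_diff)
    also have "\<dots> \<le> 1 / real p ^ (t + m)" using a1 a2 by simp
    finally have n1: "norm (of_real (1 / real p ^ (t + m)) - of_real (1 / real p ^ Suc (t + m)) :: complex)
        \<le> 1 / real p ^ (t + m)" .
    have n2: "norm (g (p ^ (t + m)) - 1) \<le> 2"
      using gb[of "t + m"] norm_triangle_ineq4[of "g (p ^ (t + m))" 1] by simp
    have "norm (tm (t + (m - 1))) \<le> 2 * (1 / real p ^ (t + m))"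
      unfolding tm_def e norm_mult using n1 n2 by (intro mult_mono) auto
    also have "\<dots> = bd t" unfolding bd_def r_def by (simp add: power_add power_one_over)
    finally show ?thesis .
  qed
  have sbd: "summable bd" unfolding bd_def using r0 by (intro summable_mult summable_geometric) auto
  have snt: "summable (\<lambda>t. norm (tm (t + (m - 1))))" by (rule summable_comparison_test'[OF sbd]) (use tb in auto)
  have "euler_factor g p - 1 = (\<Sum>t. tm (t + (m - 1)))" using sh by (simp add: sums_iff)
  then have "norm (euler_factor g p - 1) \<le> (\<Sum>t. norm (tm (t + (m - 1))))" using summable_norm[OF snt] by simp
  also have "\<dots> \<le> (\<Sum>t. bd t)" by (rule suminf_le[OF tb snt sbd])
  also have "\<dots> = 2 * r ^ m * (1 / (1 - r))" unfolding bd_def using r0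
    by (subst suminf_mult) (auto simp: suminf_geometric)
  also have "\<dots> \<le> 2 * r ^ m * 2"
  proof -
    have "1 / (1 - r) \<le> 2" using r0 by (simp add: field_simps)
    then show ?thesis using r0 by (intro mult_left_mono) auto
  qed
  also have "\<dots> = 4 / real p ^ m" unfolding r_def by (simp add: power_one_over)
  finally show ?thesis .
qed

lemma norm_euler_factor_small_prime:
  fixes g :: "nat \<Rightarrow> complex"
  assumes p: "prime p" and py: "real p \<le> y" and gb: "\<And>\<mu>. norm (g (p ^ \<mu>)) \<le> 1"
    and g1: "\<And>\<mu>. \<mu> \<ge> 1 \<Longrightarrow> real (p ^ \<mu>) \<le> y \<Longrightarrow> g (p ^ \<mu>) = 1"
  shows "norm (euler_factor g p - 1) \<le> 4 * min (1 / y) (1 / real p ^ 2)"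
proof -
  have p_ge_2: "p \<ge> 2" using p by (simp add: prime_ge_2_nat)
  have y2: "y \<ge> 2" using py p_ge_2 by linarith
  have b1: "norm (euler_factor g p - 1) \<le> 4 / real p ^ 2"
  proof (rule norm_euler_factor_sub_one_le[of p g, OF p_ge_2 gb])
    fix \<mu> :: nat assume "1 \<le> \<mu>" "\<mu> < 2"
    then have "\<mu> = 1" by simp
    then show "g (p ^ \<mu>) = 1" using g1[of 1] py by simp
  qed simp
  have ex: "\<exists>m. y < real p ^ m" using p_ge_2 by (intro real_arch_pow) simp
  define m where "m = (LEAST m. y < real p ^ m)"
  have m1: "y < real p ^ m" unfolding m_def by (rule LeastI_ex[OF ex])
  have m2: "\<not> y < real p ^ \<mu>" if "\<mu> < m" for \<mu> using that unfolding m_def by (rule not_less_Least)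
  have m0: "m \<ge> 1"
  proof (rule ccontr)
    assume "\<not> m \<ge> 1"
    then have "m = 0" by simp
    then show False using m1 y2 by simp
  qed
  have b2: "norm (euler_factor g p - 1) \<le> 4 / real p ^ m"
  proof (rule norm_euler_factor_sub_one_le[of p g m, OF p_ge_2 gb m0])
    fix \<mu> :: nat assume "1 \<le> \<mu>" "\<mu> < m"
    then show "g (p ^ \<mu>) = 1" using g1[of \<mu>] m2[of \<mu>] by simp
  qed
  have "4 / real p ^ m \<le> 4 / y" using m1 y2 p_ge_2 by (intro divide_left_mono mult_pos_pos) auto
  then show ?thesis using b1 b2 by (simp add: min_def)
qed

section \<open>Local parts at a prime\<close>

lemma prime_power_dvd_iff_le_multiplicity:
  fixes p L :: nat
  assumes p: "prime p" and L: "L \<noteq> 0"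
  shows "p ^ \<mu> dvd L \<longleftrightarrow> \<mu> \<le> multiplicity p L"
proof -
  have "p \<noteq> 1" using p by auto
  then show ?thesis using power_dvd_iff_le_multiplicity[of L p \<mu>] L by simp
qed

lemma local_part_eq_one:
  assumes "g 1 = 1" "\<not> p dvd L"
  shows "local_part g p L = 1"
  using assms unfolding local_part_def by (simp add: not_dvd_imp_multiplicity_0)

lemma norm_local_part_le:
  assumes "\<And>\<mu>. norm (g (p ^ \<mu>)) \<le> 1"
  shows "norm (local_part g p L) \<le> 1"
  unfolding local_part_def using assms by simp

lemma norm_at_gcd_prime_power_le:
  fixes g :: "nat \<Rightarrow> complex"
  assumes p: "prime p" and gb: "\<And>\<mu>. norm (g (p ^ \<mu>)) \<le> 1"
  shows "norm (g (gcd L (p ^ T))) \<le> 1"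
proof -
  have "gcd L (p ^ T) dvd p ^ T" by simp
  then obtain i where "gcd L (p ^ T) = p ^ i" using divides_primepow_nat[OF p] by blast
  then show ?thesis using gb by simp
qed

lemma gcd_prime_power_eq:
  fixes L :: nat
  assumes p: "prime p" and L: "L \<noteq> 0" and nd1: "\<not> p ^ Suc T dvd L"
  shows "gcd L (p ^ T) = p ^ multiplicity p L"
proof -
  define v where "v = multiplicity p L"
  have vT: "v \<le> T" using nd1 prime_power_dvd_iff_le_multiplicity[OF p L, of "Suc T"] unfolding v_def by simp
  have d1: "p ^ v dvd L" using prime_power_dvd_iff_le_multiplicity[OF p L, of v] unfolding v_def by simp
  have d2: "p ^ v dvd p ^ T" using vT by (rule le_imp_power_dvd)
  have "gcd L (p ^ T) dvd p ^ T" by simp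
  then obtain i where i: "i \<le> T" "gcd L (p ^ T) = p ^ i" using divides_primepow_nat[OF p] by blast
  have "p ^ i dvd L" using i(2) by (metis gcd_dvd1)
  then have "i \<le> v" using prime_power_dvd_iff_le_multiplicity[OF p L, of i] unfolding v_def by simp
  have "p ^ v dvd p ^ i" using d1 d2 i(2) by (metis gcd_greatest)
  then have "v \<le> i"
    using prime_power_dvd_iff_le_multiplicity[OF p, of "p ^ i" v] p
    by (simp add: prime_elem_multiplicity_eq_zero_iff)
  then show ?thesis using \<open>i \<le> v\<close> i(2) v_def by simp
qed

lemma norm_local_part_sub_gcd_le:
  fixes g :: "nat \<Rightarrow> complex"
  assumes p: "prime p" and L: "L \<noteq> 0" and gb: "\<And>\<mu>. norm (g (p ^ \<mu>)) \<le> 1"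
  shows "norm (local_part g p L - g (gcd L (p ^ T))) \<le> 2 * of_bool (p ^ Suc T dvd L)"
proof (cases "p ^ Suc T dvd L")
  case True
  have "norm (local_part g p L) \<le> 1" using gb by (rule norm_local_part_le)
  moreover have "norm (g (gcd L (p ^ T))) \<le> 1" using p gb by (rule norm_at_gcd_prime_power_le)
  ultimately show ?thesis
    using True norm_triangle_ineq4[of "local_part g p L" "g (gcd L (p ^ T))"] by simp
next
  case False
  then show ?thesis using gcd_prime_power_eq[OF p L False] unfolding local_part_def by simp
qed

text \<open>Writing \<open>v = v\<^sub>p(L)\<close>, the sum telescopes to \<open>g(p\<^sup>v) - 1\<close> as long as \<open>v \<le> M\<close>.\<close>

lemma norm_local_part_sub_one_truncation_le:
  fixes g :: "nat \<Rightarrow> complex"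
  assumes p: "prime p" and L: "L \<noteq> 0" and g1: "g 1 = 1" and gb: "\<And>\<mu>. norm (g (p ^ \<mu>)) \<le> 1"
  shows "norm (local_part g p L - 1 - (\<Sum>\<mu>\<in>{1..M}. (g (p ^ \<mu>) - 1) *
            (of_bool (p ^ \<mu> dvd L) - of_bool (p ^ Suc \<mu> dvd L))))
         \<le> 2 * of_bool (p ^ Suc M dvd L)"
proof -
  define v where "v = multiplicity p L"
  define c where "c \<mu> = g (p ^ \<mu>) - 1" for \<mu>
  have c0: "c 0 = 0" unfolding c_def using g1 by simp
  have cb: "norm (c \<mu>) \<le> 2" for \<mu>
    unfolding c_def using gb[of \<mu>]
    by (metis norm_one norm_triangle_ineq4 one_add_one add_mono order_refl order.trans)
  have ind: "p ^ \<mu> dvd L \<longleftrightarrow> \<mu> \<le> v" for \<mu>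
    unfolding v_def by (rule prime_power_dvd_iff_le_multiplicity[OF p L])
  have "(\<Sum>\<mu>\<in>{1..M}. c \<mu> * (of_bool (p ^ \<mu> dvd L) - of_bool (p ^ Suc \<mu> dvd L)))
      = (\<Sum>\<mu>\<in>{1..M}. if v = \<mu> then c \<mu> else 0)"
    unfolding ind by (intro sum.cong) auto
  also have "\<dots> = (if v \<in> {1..M} then c v else 0)" by simp
  finally have G: "(\<Sum>\<mu>\<in>{1..M}. c \<mu> * (of_bool (p ^ \<mu> dvd L) - of_bool (p ^ Suc \<mu> dvd L)))
      = (if v \<in> {1..M} then c v else 0)" .
  have F: "local_part g p L - 1 = c v" unfolding local_part_def c_def v_def by simp
  show ?thesis
  proof (cases "M < v")
    case True
    then have "p ^ Suc M dvd L" using ind[of "Suc M"] by simp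
    then show ?thesis using G F True cb[of v] unfolding c_def by simp
  next
    case False
    then have "local_part g p L - 1 - (\<Sum>\<mu>\<in>{1..M}. c \<mu> *
        (of_bool (p ^ \<mu> dvd L) - of_bool (p ^ Suc \<mu> dvd L))) = 0"
      using G F c0 by (cases "v = 0") auto
    then show ?thesis unfolding c_def by simp
  qed
qed

section \<open>The local factor at a large prime\<close>

text \<open>\<open>nd\<close> holds for primitive systems; it keeps every form positive on the box and makes
  its divisibility by \<open>p\<^sup>\<mu>\<close> a condition of density \<open>p\<^sup>-\<^sup>\<mu>\<close>.\<close>

locale prime_for_system =
  fixes p k l :: nat and \<alpha> :: "nat \<Rightarrow> nat \<Rightarrow> nat" and f :: "nat \<Rightarrow> nat \<Rightarrow> complex"
  assumes p: "prime p"
    and fb: "\<And>j \<mu>. j < k \<Longrightarrow> norm (f j (p ^ \<mu>)) \<le> 1"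
    and f1: "\<And>j. j < k \<Longrightarrow> f j 1 = 1"
    and nd: "\<And>j. j < k \<Longrightarrow> \<exists>r0\<in>{1..l}. \<not> p dvd \<alpha> j r0"
begin

lemma p_ge_2: "p \<ge> 2" using p by (simp add: prime_ge_2_nat)

lemma l_ge_1: "j < k \<Longrightarrow> l \<ge> 1"
  using nd by fastforce

lemma eval_form_box_nonzero:
  assumes j: "j < k" and n: "n \<in> box l N"
  shows "eval_form \<alpha> l j n \<noteq> 0"
proof -
  obtain r0 where r0: "r0 \<in> {1..l}" "\<not> p dvd \<alpha> j r0" using nd[OF j] by blast
  have a: "\<alpha> j r0 \<ge> 1" using r0 by (cases "\<alpha> j r0") auto
  have "n r0 \<ge> 1" using n r0 unfolding box_def by auto
  then have "\<alpha> j r0 * n r0 \<ge> 1" using a by simp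
  moreover have "\<alpha> j r0 * n r0 \<le> (\<Sum>r=1..l. \<alpha> j r * n r)"
    using r0 by (intro member_le_sum) auto
  ultimately have "1 \<le> (\<Sum>r=1..l. \<alpha> j r * n r)" by linarith
  then have "eval_form \<alpha> l j n \<ge> 1" unfolding eval_form_def by linarith
  then show ?thesis by simp
qed

lemma coprime_coeff:
  assumes "j < k"
  obtains r0 where "r0 \<in> {1..l}" "\<And>\<mu>. coprime (int (p ^ \<mu>)) (int (\<alpha> j r0))"
proof -
  obtain r0 where r0: "r0 \<in> {1..l}" "\<not> p dvd \<alpha> j r0" using nd[OF assms] by blast
  have "coprime p (\<alpha> j r0)" using r0 p by (intro prime_imp_coprime) auto
  then have "coprime (int (p ^ \<mu>)) (int (\<alpha> j r0))" for \<mu> by simp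
  then show ?thesis using that r0 by blast
qed

lemma normalized_card_dvd_form_tendsto:
  assumes "j < k"
  shows "((\<lambda>x. x powr (- real l) * real (card {n\<in>box l (nat \<lfloor>x\<rfloor>). p ^ \<mu> dvd eval_form \<alpha> l j n}))
           \<longlongrightarrow> 1 / real p ^ \<mu>) at_top"
proof -
  obtain r0 where r0: "r0 \<in> {1..l}" "\<And>\<mu>. coprime (int (p ^ \<mu>)) (int (\<alpha> j r0))"
    using coprime_coeff[OF assms] by blast
  have q: "p ^ \<mu> > 0" using p_ge_2 by simp
  show ?thesis using normalized_card_box_dvd_form_tendsto[of r0 l "p^\<mu>" \<alpha> j, OF r0(1) r0(2) q] by simp
qed

lemma eventually_normalized_card_dvd_form_le:
  assumes "j < k"
  shows "eventually (\<lambda>x. x powr (- real l) * real (card {n\<in>box l (nat \<lfloor>x\<rfloor>). p ^ \<mu> dvd eval_form \<alpha> l j n})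
           \<le> 2 / real p ^ \<mu>) at_top"
  using eventually_ge_at_top[of "real p ^ \<mu>"]
proof eventually_elim
  case (elim x)
  obtain r0 where r0: "r0 \<in> {1..l}" "\<And>\<mu>. coprime (int (p ^ \<mu>)) (int (\<alpha> j r0))"
    using coprime_coeff[OF assms(1)] by blast
  have q: "p ^ \<mu> > 0" using p_ge_2 by simp
  have pm: "real p ^ \<mu> \<ge> 1" using p_ge_2 by (simp add: one_le_power)
  then have x1: "x \<ge> 1" using elim by linarith
  have "1 / x \<le> 1 / real p ^ \<mu>" using elim pm x1 p_ge_2 by (intro divide_left_mono mult_pos_pos) auto
  then show ?case
    using normalized_card_box_dvd_form_le[of r0 l "p^\<mu>" \<alpha> j x, OF r0(1) r0(2) q x1] by simp
qed

lemma box_avg_dvd_form_tendsto: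
  assumes "j < k"
  shows "(box_avg l (\<lambda>n. of_bool (p ^ \<mu> dvd eval_form \<alpha> l j n)) \<longlongrightarrow> of_real (1 / real p ^ \<mu>)) at_top"
  unfolding box_avg_of_bool by (rule tendsto_of_real[OF normalized_card_dvd_form_tendsto[OF assms]])

lemma eventually_norm_box_avg_le_dvd_count:
  assumes J: "J \<subseteq> {..<k}"
    and D: "\<And>n N. n \<in> box l N \<Longrightarrow> norm (D n) \<le> (\<Sum>j\<in>J. 2 * of_bool (p ^ \<mu> dvd eval_form \<alpha> l j n))"
  shows "eventually (\<lambda>x. norm (box_avg l D x) \<le> 4 * real (card J) / real p ^ \<mu>) at_top"
proof -
  let ?c = "\<lambda>x j. real (card {n\<in>box l (nat \<lfloor>x\<rfloor>). p ^ \<mu> dvd eval_form \<alpha> l j n})"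
  have fJ: "finite J" using J finite_subset by blast
  have "eventually (\<lambda>x. \<forall>j\<in>J. x powr (- real l) * ?c x j \<le> 2 / real p ^ \<mu>) at_top"
    using J fJ by (intro eventually_ball_finite ballI eventually_normalized_card_dvd_form_le) auto
  then show ?thesis
  proof eventually_elim
    case (elim x)
    have "norm (box_avg l D x) \<le> x powr (- real l) *
        (\<Sum>n\<in>box l (nat \<lfloor>x\<rfloor>). \<Sum>j\<in>J. 2 * of_bool (p ^ \<mu> dvd eval_form \<alpha> l j n))"
      by (rule box_avg_norm_le) (rule D)
    also have "(\<Sum>n\<in>box l (nat \<lfloor>x\<rfloor>). \<Sum>j\<in>J. 2 * (of_bool (p ^ \<mu> dvd eval_form \<alpha> l j n) :: real))
        = (\<Sum>j\<in>J. 2 * ?c x j)"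
      by (subst sum.swap) (simp add: sum_distrib_left[symmetric] sum_of_bool_eq_card[OF finite_box])
    also have "x powr (- real l) * (\<Sum>j\<in>J. 2 * ?c x j) = (\<Sum>j\<in>J. 2 * (x powr (- real l) * ?c x j))"
      by (simp add: sum_distrib_left mult.left_commute)
    also have "\<dots> \<le> (\<Sum>j\<in>J. 2 * (2 / real p ^ \<mu>))"
      using elim by (intro sum_mono mult_left_mono) auto
    also have "\<dots> = 4 * real (card J) / real p ^ \<mu>" by simp
    finally show ?case .
  qed
qed

text \<open>The average of \<open>f\<^sub>j\<^sub>,\<^sub>p(L\<^sub>j(n)) - 1\<close> is approximated by the truncations of
  \<open>\<Sum>\<^sub>\<mu> (f\<^sub>j(p\<^sup>\<mu>) - 1)(1[p\<^sup>\<mu> | L\<^sub>j(n)] - 1[p\<^sup>\<mu>\<^sup>+\<^sup>1 | L\<^sub>j(n)])\<close>, whose averages converge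
  to the partial sums of the series for \<open>E\<^sub>p(f\<^sub>j) - 1\<close>.\<close>

lemma box_avg_local_part_tendsto:
  assumes j: "j < k"
  shows "(box_avg l (\<lambda>n. local_part (f j) p (eval_form \<alpha> l j n) - 1) \<longlongrightarrow> euler_factor (f j) p - 1) at_top"
proof -
  define L where "L n = eval_form \<alpha> l j n" for n
  define c where "c \<mu> = f j (p ^ \<mu>) - 1" for \<mu>
  define F where "F n = local_part (f j) p (L n) - 1" for n
  define ind where "ind \<mu> n = (of_bool (p ^ \<mu> dvd L n) :: complex)" for \<mu> n
  define G where "G M n = (\<Sum>\<mu>\<in>{1..M}. c \<mu> * (ind \<mu> n - ind (Suc \<mu>) n))" for M n
  define Lv where "Lv M = (\<Sum>\<mu>\<in>{1..M}. c \<mu> * (of_real (1 / real p ^ \<mu>) - of_real (1 / real p ^ Suc \<mu>)))" for M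
  define \<eta> where "\<eta> M = 4 / real p ^ Suc M" for M
  have G_lim: "(box_avg l (G M) \<longlongrightarrow> Lv M) at_top" for M
  proof -
    have "box_avg l (G M) = (\<lambda>x. \<Sum>\<mu>\<in>{1..M}. c \<mu> * (box_avg l (ind \<mu>) x - box_avg l (ind (Suc \<mu>)) x))"
      unfolding G_def by (rule ext) (simp add: box_avg_sum box_avg_cmult box_avg_diff)
    moreover have "((\<lambda>x. \<Sum>\<mu>\<in>{1..M}. c \<mu> * (box_avg l (ind \<mu>) x - box_avg l (ind (Suc \<mu>)) x)) \<longlongrightarrow> Lv M) at_top"
      unfolding Lv_def ind_def L_def
      by (intro tendsto_sum tendsto_mult tendsto_const tendsto_diff box_avg_dvd_form_tendsto j)
    ultimately show ?thesis by simp
  qed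
  have E: "eventually (\<lambda>x. norm (box_avg l F x - box_avg l (G M) x) \<le> \<eta> M) at_top" for M
  proof -
    have "eventually (\<lambda>x. norm (box_avg l (\<lambda>n. F n - G M n) x) \<le> 4 * real (card {j}) / real p ^ Suc M) at_top"
    proof (rule eventually_norm_box_avg_le_dvd_count)
      fix n N assume "n \<in> box l N"
      then have "norm (F n - G M n) \<le> 2 * of_bool (p ^ Suc M dvd eval_form \<alpha> l j n)"
        using norm_local_part_sub_one_truncation_le[OF p eval_form_box_nonzero[OF j] f1[OF j] fb[OF j]]
        unfolding F_def G_def c_def ind_def L_def by simp
      then show "norm (F n - G M n) \<le> (\<Sum>j'\<in>{j}. 2 * of_bool (p ^ Suc M dvd eval_form \<alpha> l j' n))"
        by (subst sum.insert) auto
    qed (use j in simp)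
    then show ?thesis unfolding \<eta>_def by (simp add: box_avg_diff)
  qed
  have eta: "\<eta> \<longlonglongrightarrow> 0"
    unfolding \<eta>_def using LIMSEQ_Suc[OF LIMSEQ_divide_realpow_zero[of "real p" 4]] p_ge_2 by simp
  obtain L0 where L0: "(box_avg l F \<longlongrightarrow> L0) at_top" "Lv \<longlonglongrightarrow> L0"
    using tendsto_of_uniform_approximants[OF G_lim E eta] by blast
  have "Lv \<longlonglongrightarrow> euler_factor (f j) p - 1"
    unfolding Lv_def c_def by (rule euler_factor_sub_one_partial_sums[of p "f j", OF p_ge_2 fb[OF j]])
  then have "L0 = euler_factor (f j) p - 1" using L0(2) LIMSEQ_unique by blast
  then show ?thesis using L0(1) unfolding F_def L_def by simp
qed

text \<open>The limit exists because the product is approximated by the \<open>p\<^sup>T\<close>-periodic functions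
  \<open>\<Prod>\<^sub>j f\<^sub>j(gcd(L\<^sub>j(n), p\<^sup>T))\<close>, which differ from it only where \<open>p\<^sup>T\<^sup>+\<^sup>1\<close> divides some form.\<close>

lemma box_avg_local_product_convergent:
  "\<exists>M0. (box_avg l (\<lambda>n. \<Prod>j<k. local_part (f j) p (eval_form \<alpha> l j n)) \<longlongrightarrow> M0) at_top"
proof -
  define g where "g n = (\<Prod>j<k. local_part (f j) p (eval_form \<alpha> l j n))" for n
  define gT where "gT T n = (\<Prod>j<k. f j (gcd (eval_form \<alpha> l j n) (p ^ T)))" for T n
  define \<eta> where "\<eta> T = 4 * real k / real p ^ Suc T" for T
  have pT: "p ^ T > 0" for T using p_ge_2 by simp
  have per: "\<exists>L. (box_avg l (gT T) \<longlongrightarrow> L) at_top" for T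
  proof (rule box_avg_periodic_convergent[OF pT])
    fix n n' assume "\<forall>r\<in>{1..l}. n r mod p ^ T = n' r mod p ^ T"
    then have "eval_form \<alpha> l j n mod p ^ T = eval_form \<alpha> l j n' mod p ^ T" for j
      by (rule eval_form_mod_cong)
    then have "gcd (eval_form \<alpha> l j n) (p ^ T) = gcd (eval_form \<alpha> l j n') (p ^ T)" for j
      by (metis gcd_mod_left pT neq0_conv)
    then show "gT T n = gT T n'" unfolding gT_def by simp
  qed
  define Lv where "Lv T = (SOME L. (box_avg l (gT T) \<longlongrightarrow> L) at_top)" for T
  have G: "(box_avg l (gT T) \<longlongrightarrow> Lv T) at_top" for T
    unfolding Lv_def using someI_ex[OF per[of T]] .
  have E: "eventually (\<lambda>x. norm (box_avg l g x - box_avg l (gT T) x) \<le> \<eta> T) at_top" for T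
  proof -
    have "eventually (\<lambda>x. norm (box_avg l (\<lambda>n. g n - gT T n) x) \<le> 4 * real (card {..<k}) / real p ^ Suc T) at_top"
    proof (rule eventually_norm_box_avg_le_dvd_count)
      fix n N assume n: "n \<in> box l N"
      have "norm (g n - gT T n) \<le> (\<Sum>j<k. norm (local_part (f j) p (eval_form \<alpha> l j n)
          - f j (gcd (eval_form \<alpha> l j n) (p ^ T))))"
        unfolding g_def gT_def
        by (rule norm_prod_diff) (simp_all add: norm_local_part_le norm_at_gcd_prime_power_le p fb)
      also have "\<dots> \<le> (\<Sum>j<k. 2 * of_bool (p ^ Suc T dvd eval_form \<alpha> l j n))"
        by (intro sum_mono norm_local_part_sub_gcd_le p eval_form_box_nonzero[OF _ n] fb) auto
      finally show "norm (g n - gT T n) \<le> (\<Sum>j<k. 2 * of_bool (p ^ Suc T dvd eval_form \<alpha> l j n))" .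
    qed simp
    then show ?thesis unfolding \<eta>_def by (simp add: box_avg_diff)
  qed
  have eta: "\<eta> \<longlonglongrightarrow> 0"
    unfolding \<eta>_def using LIMSEQ_Suc[OF LIMSEQ_divide_realpow_zero[of "real p" "4 * real k"]] p_ge_2 by simp
  show ?thesis using tendsto_of_uniform_approximants[OF G E eta] unfolding g_def by blast
qed

lemma box_avg_local_product_tendsto_M_p:
  "(box_avg l (\<lambda>n. \<Prod>j<k. local_part (f j) p (eval_form \<alpha> l j n)) \<longlongrightarrow> M_p k l f \<alpha> p) at_top"
proof -
  obtain M0 where M0: "(box_avg l (\<lambda>n. \<Prod>j<k. local_part (f j) p (eval_form \<alpha> l j n)) \<longlongrightarrow> M0) at_top"
    using box_avg_local_product_convergent by blast
  moreover have "M_p k l f \<alpha> p = Lim at_top (box_avg l (\<lambda>n. \<Prod>j<k. local_part (f j) p (eval_form \<alpha> l j n)))"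
    unfolding M_p_def box_avg_def box_def ..
  ultimately show ?thesis using tendsto_Lim[OF trivial_limit_at_top_linorder] by metis
qed

lemma norm_local_product_second_order_le:
  assumes n: "n \<in> box l N"
  shows "norm ((\<Prod>j<k. local_part (f j) p (eval_form \<alpha> l j n)) - 1
            - (\<Sum>j<k. local_part (f j) p (eval_form \<alpha> l j n) - 1))
      \<le> (2 + 2 * real k) *
         (\<Sum>i<k. \<Sum>j\<in>{..<k} - {i}. of_bool (p dvd eval_form \<alpha> l i n \<and> p dvd eval_form \<alpha> l j n))"
    (is "norm ?R \<le> _ * ?S")
proof (cases "\<exists>i<k. \<exists>j<k. i \<noteq> j \<and> p dvd eval_form \<alpha> l i n \<and> p dvd eval_form \<alpha> l j n")
  case True
  then obtain i j where ij: "i < k" "j < k" "i \<noteq> j"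
    and dvd: "p dvd eval_form \<alpha> l i n" "p dvd eval_form \<alpha> l j n" by blast
  have "(1::real) \<le> (\<Sum>j'\<in>{..<k} - {i}. of_bool (p dvd eval_form \<alpha> l i n \<and> p dvd eval_form \<alpha> l j' n))"
  proof -
    have "(1::real) = of_bool (p dvd eval_form \<alpha> l i n \<and> p dvd eval_form \<alpha> l j n)" using dvd by simp
    also have "\<dots> \<le> (\<Sum>j'\<in>{..<k} - {i}. of_bool (p dvd eval_form \<alpha> l i n \<and> p dvd eval_form \<alpha> l j' n))"
      using ij by (intro member_le_sum) auto
    finally show ?thesis .
  qed
  also have "\<dots> \<le> ?S"
    using ij by (intro member_le_sum[where f = "\<lambda>i. \<Sum>j\<in>{..<k} - {i}. of_bool (p dvd eval_form \<alpha> l i n \<and> p dvd eval_form \<alpha> l j n)"] sum_nonneg) auto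
  finally have S1: "1 \<le> ?S" .
  have "norm ?R \<le> 2 + 2 * real (card {..<k})"
    by (intro norm_prod_sub_one_sub_sum_le norm_local_part_le fb) auto
  also have "\<dots> \<le> (2 + 2 * real k) * ?S" using mult_left_mono[OF S1, of "2 + 2 * real k"] by simp
  finally show ?thesis .
next
  case False
  have "?R = 0"
  proof (rule prod_sub_one_sub_sum_eq_zero)
    fix i j assume ij: "i \<in> {..<k}" "j \<in> {..<k}"
      and "local_part (f i) p (eval_form \<alpha> l i n) \<noteq> 1" "local_part (f j) p (eval_form \<alpha> l j n) \<noteq> 1"
    then have "p dvd eval_form \<alpha> l i n" "p dvd eval_form \<alpha> l j n"
      using local_part_eq_one[of "f i" p] local_part_eq_one[of "f j" p] f1 by auto
    then show "i = j" using False ij by blast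
  qed simp
  then show ?thesis by (simp add: sum_nonneg)
qed

lemma sum_norm_euler_factor_sub_one_le:
  "(\<Sum>j<k. norm (euler_factor (f j) p - 1)) \<le> real k * (4 / real p)"
proof -
  have "(\<Sum>j<k. norm (euler_factor (f j) p - 1)) \<le> (\<Sum>j<k. 4 / real p ^ 1)"
    by (intro sum_mono norm_euler_factor_sub_one_le p_ge_2 fb) auto
  then show ?thesis by simp
qed

lemma norm_euler_product_sub_one_le:
  assumes "16 * k \<le> p"
  shows "norm ((\<Prod>j<k. euler_factor (f j) p) - 1) \<le> 1 / 2"
proof -
  have small: "real k * (4 / real p) \<le> 1 / 4" using assms p_ge_2 by (simp add: field_simps)
  have "norm ((\<Prod>j<k. 1 + (euler_factor (f j) p - 1)) - 1) \<le> 2 * (\<Sum>j<k. norm (euler_factor (f j) p - 1))"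
    using sum_norm_euler_factor_sub_one_le small by (intro norm_prod_one_plus_sub_one_le) auto
  then show ?thesis using sum_norm_euler_factor_sub_one_le small by simp
qed

end

text \<open>Pairwise independence of the forms enters only through \<open>pair\<close>: two of them are
  divisible by \<open>p\<close> on a subset of the box of density \<open>O(p\<^sup>-\<^sup>2)\<close>.\<close>

locale prime_for_independent_system = prime_for_system +
  assumes pair: "\<And>i j N. i < k \<Longrightarrow> j < k \<Longrightarrow> i \<noteq> j \<Longrightarrow> N \<ge> 1 \<Longrightarrow>
      real (card {n\<in>box l N. p dvd eval_form \<alpha> l i n \<and> p dvd eval_form \<alpha> l j n})
        \<le> (1 / real p ^ 2) * real N ^ l + 3 * real N ^ (l - 1)"
begin

lemma eventually_norm_box_avg_second_order_le:
  assumes k0: "k > 0"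
  shows "eventually (\<lambda>x. norm (box_avg l (\<lambda>n. (\<Prod>j<k. local_part (f j) p (eval_form \<alpha> l j n)) - 1
            - (\<Sum>j<k. local_part (f j) p (eval_form \<alpha> l j n) - 1)) x)
          \<le> (2 + 2 * real k) * (real k * real k) * (2 / real p ^ 2)) at_top"
  using eventually_ge_at_top[of "max 1 (3 * real p ^ 2)"]
proof eventually_elim
  case (elim x)
  define ind where "ind i j n = (of_bool (p dvd eval_form \<alpha> l i n \<and> p dvd eval_form \<alpha> l j n) :: real)" for i j n
  have l: "l \<ge> 1" using l_ge_1[OF k0] .
  have p0: "real p > 0" using p_ge_2 by simp
  have x1: "x \<ge> 1" and x3: "x \<ge> 3 * real p ^ 2" using elim by auto
  have x3': "3 / x \<le> 1 / real p ^ 2" using x3 p0 x1 by (simp add: field_simps)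
  have cb: "x powr (- real l) * real (card {n\<in>box l (nat \<lfloor>x\<rfloor>). p dvd eval_form \<alpha> l i n \<and> p dvd eval_form \<alpha> l j n})
      \<le> 2 / real p ^ 2" if "i < k" "j < k" "i \<noteq> j" for i j
  proof -
    have "x powr (- real l) * (\<lambda>N. real (card {n\<in>box l N. p dvd eval_form \<alpha> l i n \<and> p dvd eval_form \<alpha> l j n})) (nat \<lfloor>x\<rfloor>)
        \<le> 1 / real p ^ 2 + 3 / x"
      by (rule normalized_count_le[OF l _ _ pair[OF that] x1]) auto
    then show ?thesis using x3' by simp
  qed
  have pairs: "(\<Sum>i<k. \<Sum>j\<in>{..<k} - {i}. 2 / real p ^ 2) \<le> real k * real k * (2 / real p ^ 2)"
  proof -
    have "(\<Sum>i<k. \<Sum>j\<in>{..<k} - {i}. 2 / real p ^ 2) \<le> (\<Sum>i<k. \<Sum>j<k. 2 / real p ^ 2)"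
      by (intro sum_mono sum_mono2) auto
    then show ?thesis by simp
  qed
  have "norm (box_avg l (\<lambda>n. (\<Prod>j<k. local_part (f j) p (eval_form \<alpha> l j n)) - 1
            - (\<Sum>j<k. local_part (f j) p (eval_form \<alpha> l j n) - 1)) x)
      \<le> x powr (- real l) * (\<Sum>n\<in>box l (nat \<lfloor>x\<rfloor>). (2 + 2 * real k) * (\<Sum>i<k. \<Sum>j\<in>{..<k} - {i}. ind i j n))"
    unfolding ind_def by (intro box_avg_norm_le norm_local_product_second_order_le)
  also have "\<dots> = (2 + 2 * real k) * (\<Sum>i<k. \<Sum>j\<in>{..<k} - {i}. x powr (- real l) *
      real (card {n\<in>box l (nat \<lfloor>x\<rfloor>). p dvd eval_form \<alpha> l i n \<and> p dvd eval_form \<alpha> l j n}))"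
  proof -
    have "(\<Sum>n\<in>box l (nat \<lfloor>x\<rfloor>). (2 + 2 * real k) * (\<Sum>i<k. \<Sum>j\<in>{..<k} - {i}. ind i j n))
       = (2 + 2 * real k) * (\<Sum>i<k. \<Sum>j\<in>{..<k} - {i}. \<Sum>n\<in>box l (nat \<lfloor>x\<rfloor>). ind i j n)"
      by (simp add: sum_distrib_left[symmetric] sum.swap[of _ "box l (nat \<lfloor>x\<rfloor>)"])
    also have "\<dots> = (2 + 2 * real k) * (\<Sum>i<k. \<Sum>j\<in>{..<k} - {i}.
        real (card {n\<in>box l (nat \<lfloor>x\<rfloor>). p dvd eval_form \<alpha> l i n \<and> p dvd eval_form \<alpha> l j n}))"
      unfolding ind_def sum_of_bool_eq_card[OF finite_box] by simp
    finally show ?thesis by (simp add: sum_distrib_left mult.left_commute)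
  qed
  also have "\<dots> \<le> (2 + 2 * real k) * (\<Sum>i<k. \<Sum>j\<in>{..<k} - {i}. 2 / real p ^ 2)"
    using cb by (intro mult_left_mono sum_mono) auto
  also have "\<dots> \<le> (2 + 2 * real k) * (real k * real k * (2 / real p ^ 2))"
    using pairs by (intro mult_left_mono) auto
  finally show ?case by (simp only: mult.assoc)
qed

lemma norm_M_p_first_order_le:
  "norm (M_p k l f \<alpha> p - 1 - (\<Sum>j<k. euler_factor (f j) p - 1))
     \<le> (2 + 2 * real k) * (real k * real k) * (2 / real p ^ 2)"
proof -
  define F where "F j n = local_part (f j) p (eval_form \<alpha> l j n)" for j n
  define R where "R n = (\<Prod>j<k. F j n) - 1 - (\<Sum>j<k. F j n - 1)" for n
  have "box_avg l R = (\<lambda>x. box_avg l (\<lambda>n. \<Prod>j<k. F j n) x - box_avg l (\<lambda>n. 1) x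
      - (\<Sum>j<k. box_avg l (\<lambda>n. F j n - 1) x))"
    unfolding R_def by (rule ext) (simp add: box_avg_diff box_avg_sum)
  moreover have "((\<lambda>x. box_avg l (\<lambda>n. \<Prod>j<k. F j n) x - box_avg l (\<lambda>n. 1) x
      - (\<Sum>j<k. box_avg l (\<lambda>n. F j n - 1) x))
      \<longlongrightarrow> M_p k l f \<alpha> p - 1 - (\<Sum>j<k. euler_factor (f j) p - 1)) at_top"
    unfolding F_def
    by (intro tendsto_diff tendsto_sum box_avg_local_product_tendsto_M_p box_avg_one_tendsto
        box_avg_local_part_tendsto) auto
  ultimately have lim: "(box_avg l R \<longlongrightarrow> M_p k l f \<alpha> p - 1 - (\<Sum>j<k. euler_factor (f j) p - 1)) at_top"
    by simp
  have "eventually (\<lambda>x. norm (box_avg l R x) \<le> (2 + 2 * real k) * (real k * real k) * (2 / real p ^ 2)) at_top"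
  proof (cases "k = 0")
    case True
    then show ?thesis by (simp add: R_def box_avg_def)
  next
    case False
    then show ?thesis
      using eventually_norm_box_avg_second_order_le unfolding R_def F_def by simp
  qed
  then show ?thesis by (rule tendsto_upperbound[OF tendsto_norm[OF lim]]) simp
qed

lemma norm_M_p_sub_euler_product_le:
  assumes kp: "4 * k \<le> p"
  shows "norm (M_p k l f \<alpha> p - (\<Prod>j<k. euler_factor (f j) p)) \<le> 8 * (real k + 1) ^ 3 / real p ^ 2"
proof -
  let ?S = "\<Sum>j<k. euler_factor (f j) p - 1"
  have p0: "real p > 0" using p_ge_2 by simp
  have es1: "real k * (4 / real p) \<le> 1" using kp p0 by (simp add: field_simps)
  have "norm ((\<Prod>j<k. 1 + (euler_factor (f j) p - 1)) - 1 - ?S)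
      \<le> (\<Sum>j<k. norm (euler_factor (f j) p - 1))\<^sup>2"
    using sum_norm_euler_factor_sub_one_le es1 by (intro norm_prod_one_plus_second_order_le) auto
  also have "\<dots> \<le> (real k * (4 / real p))\<^sup>2"
    using sum_norm_euler_factor_sub_one_le by (intro power_mono sum_nonneg) auto
  finally have second: "norm ((\<Prod>j<k. euler_factor (f j) p) - 1 - ?S) \<le> (real k * (4 / real p))\<^sup>2"
    by simp
  have "norm (M_p k l f \<alpha> p - (\<Prod>j<k. euler_factor (f j) p))
      \<le> norm (M_p k l f \<alpha> p - 1 - ?S) + norm ((\<Prod>j<k. euler_factor (f j) p) - 1 - ?S)"
    using norm_triangle_ineq4[of "M_p k l f \<alpha> p - 1 - ?S" "(\<Prod>j<k. euler_factor (f j) p) - 1 - ?S"]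
    by simp
  also have "\<dots> \<le> (2 + 2 * real k) * (real k * real k) * (2 / real p ^ 2) + (real k * (4 / real p))\<^sup>2"
    using norm_M_p_first_order_le second by (rule add_mono)
  also have "\<dots> = (4 * real k ^ 3 + 20 * real k ^ 2) / real p ^ 2"
    using p0 by (simp add: field_simps power2_eq_square power3_eq_cube)
  also have "\<dots> \<le> 8 * (real k + 1) ^ 3 / real p ^ 2"
  proof (rule divide_right_mono)
    have "(real k + 1) ^ 3 = real k ^ 3 + 3 * real k ^ 2 + 3 * real k + 1"
      by (simp add: power3_eq_cube power2_eq_square algebra_simps)
    moreover have "real k ^ 3 \<ge> 0" "real k ^ 2 \<ge> 0" by auto
    ultimately show "4 * real k ^ 3 + 20 * real k ^ 2 \<le> 8 * (real k + 1) ^ 3" by linarith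
  qed auto
  finally show ?thesis .
qed

lemma norm_M_p_div_euler_product_sub_one_le:
  assumes "16 * k \<le> p"
  shows "norm (M_p k l f \<alpha> p / (\<Prod>j<k. euler_factor (f j) p) - 1) \<le> 16 * (real k + 1) ^ 3 / real p ^ 2"
proof -
  have "norm (M_p k l f \<alpha> p / (\<Prod>j<k. euler_factor (f j) p) - 1)
      \<le> 2 * norm (M_p k l f \<alpha> p - (\<Prod>j<k. euler_factor (f j) p))"
    using norm_euler_product_sub_one_le[OF assms] by (rule norm_divide_sub_one_le)
  also have "\<dots> \<le> 2 * (8 * (real k + 1) ^ 3 / real p ^ 2)"
    using assms by (intro mult_left_mono norm_M_p_sub_euler_product_le) auto
  finally show ?thesis by simp
qed

end

section \<open>Primitive systems\<close>

definition coeff_bound :: "nat \<Rightarrow> nat \<Rightarrow> (nat \<Rightarrow> nat \<Rightarrow> nat) \<Rightarrow> nat" where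
  "coeff_bound k l \<alpha> = (\<Sum>i<k. \<Sum>j<k. \<Sum>r\<le>l. \<Sum>s\<le>l. \<alpha> i r * \<alpha> j s)"

lemma coeff_product_le_coeff_bound:
  assumes "i < k" "j < k" "r \<le> l" "s \<le> l"
  shows "\<alpha> i r * \<alpha> j s \<le> coeff_bound k l \<alpha>"
proof -
  have "\<alpha> i r * \<alpha> j s \<le> (\<Sum>s\<le>l. \<alpha> i r * \<alpha> j s)" using assms by (intro member_le_sum) auto
  also have "\<dots> \<le> (\<Sum>r\<le>l. \<Sum>s\<le>l. \<alpha> i r * \<alpha> j s)"
    using assms by (intro member_le_sum[where f = "\<lambda>r. \<Sum>s\<le>l. \<alpha> i r * \<alpha> j s"]) auto
  also have "\<dots> \<le> (\<Sum>j<k. \<Sum>r\<le>l. \<Sum>s\<le>l. \<alpha> i r * \<alpha> j s)"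
    using assms by (intro member_le_sum[where f = "\<lambda>j. \<Sum>r\<le>l. \<Sum>s\<le>l. \<alpha> i r * \<alpha> j s"]) auto
  also have "\<dots> \<le> coeff_bound k l \<alpha>" unfolding coeff_bound_def
    using assms by (intro member_le_sum[where f = "\<lambda>i. \<Sum>j<k. \<Sum>r\<le>l. \<Sum>s\<le>l. \<alpha> i r * \<alpha> j s"]) auto
  finally show ?thesis .
qed

lemma not_dvd_nonzero_smaller_diff:
  fixes p :: nat and a b :: nat
  assumes "a \<le> W" "b \<le> W" "W < p" "int a - int b \<noteq> 0"
  shows "\<not> int p dvd int a - int b"
proof
  assume "int p dvd int a - int b"
  then have "\<bar>int p\<bar> \<le> \<bar>int a - int b\<bar>" by (rule dvd_imp_le_int[OF assms(4)])
  then show False using assms(1-3) by linarith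
qed

lemma primitive_system_coeff_not_dvd:
  assumes prim: "primitive_system k l \<alpha>" and j: "j < k" and p: "prime p"
  shows "\<exists>r0\<in>{1..l}. \<not> p dvd \<alpha> j r0"
proof (rule ccontr)
  assume "\<not> ?thesis"
  then have "\<forall>r\<in>{1..l}. p dvd \<alpha> j r" by blast
  then have "p dvd Gcd (\<alpha> j ` {1..l})" by (intro Gcd_greatest) auto
  moreover have "Gcd (\<alpha> j ` {1..l}) = 1" using prim j unfolding primitive_system_def by blast
  ultimately show False using p by simp
qed

lemma primitive_system_independent_constants:
  assumes prim: "primitive_system k l \<alpha>" and i: "i < k" and j: "j < k" and ij: "i \<noteq> j"
    and r: "\<alpha> i r \<noteq> 0" and rel: "\<forall>s\<in>{1..l}. \<alpha> j r * \<alpha> i s = \<alpha> i r * \<alpha> j s"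
  shows "\<alpha> j r * \<alpha> i 0 \<noteq> \<alpha> i r * \<alpha> j 0"
proof
  assume rel0: "\<alpha> j r * \<alpha> i 0 = \<alpha> i r * \<alpha> j 0"
  have "real (\<alpha> j r) * real (\<alpha> i s) + (- real (\<alpha> i r)) * real (\<alpha> j s) = 0" if "s \<in> {0..l}" for s
  proof -
    have "\<alpha> j r * \<alpha> i s = \<alpha> i r * \<alpha> j s"
      using that rel rel0 by (cases "s = 0") auto
    then have "real (\<alpha> j r * \<alpha> i s) = real (\<alpha> i r * \<alpha> j s)" by simp
    then show ?thesis by simp
  qed
  then have "- real (\<alpha> i r) = 0" using prim i j ij unfolding primitive_system_def by blast
  then show False using r by simp
qed

lemma primitive_system_card_box_dvd_two_forms_le:
  assumes prim: "primitive_system k l \<alpha>" and i: "i < k" and j: "j < k" and ij: "i \<noteq> j"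
    and p: "prime p" and pW: "coeff_bound k l \<alpha> < p" and N: "N \<ge> 1"
  shows "real (card {n\<in>box l N. p dvd eval_form \<alpha> l i n \<and> p dvd eval_form \<alpha> l j n})
        \<le> (1 / real p ^ 2) * real N ^ l + 3 * real N ^ (l - 1)"
proof (cases "\<exists>r\<in>{1..l}. \<exists>s\<in>{1..l}. \<alpha> i r * \<alpha> j s \<noteq> \<alpha> i s * \<alpha> j r")
  case True
  then obtain r s where rs: "r \<in> {1..l}" "s \<in> {1..l}" "\<alpha> i r * \<alpha> j s \<noteq> \<alpha> i s * \<alpha> j r" by blast
  have l2: "l \<ge> 2" using rs by (cases "r = s") auto
  have "int (\<alpha> i r * \<alpha> j s) \<noteq> int (\<alpha> i s * \<alpha> j r)" using rs(3) by (metis of_nat_eq_iff)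
  then have ne: "int (\<alpha> i r * \<alpha> j s) - int (\<alpha> i s * \<alpha> j r) \<noteq> 0" by simp
  have "\<not> int p dvd int (\<alpha> i r * \<alpha> j s) - int (\<alpha> i s * \<alpha> j r)"
    by (rule not_dvd_nonzero_smaller_diff[OF coeff_product_le_coeff_bound coeff_product_le_coeff_bound pW ne])
       (use i j rs in auto)
  then have D: "\<not> int p dvd int (\<alpha> i r) * int (\<alpha> j s) - int (\<alpha> i s) * int (\<alpha> j r)" by simp
  have p2: "p \<ge> 2" using p by (simp add: prime_ge_2_nat)
  show ?thesis by (rule real_card_bound_two_coords[OF N l2 p2 card_box_dvd_two_forms_le[OF rs(1,2) p D]])
next
  case False
  have "Gcd (\<alpha> i ` {1..l}) = 1" using prim i unfolding primitive_system_def by blast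
  then have "\<not> \<alpha> i ` {1..l} \<subseteq> {0}" by (metis Gcd_0_iff zero_neq_one)
  then obtain r where r: "r \<in> {1..l}" "\<alpha> i r \<noteq> 0" by blast
  have minors: "\<And>r s. r \<in> {1..l} \<Longrightarrow> s \<in> {1..l} \<Longrightarrow> \<alpha> i r * \<alpha> j s = \<alpha> i s * \<alpha> j r"
    using False by blast
  have rel: "\<forall>s\<in>{1..l}. \<alpha> j r * \<alpha> i s = \<alpha> i r * \<alpha> j s"
    using minors[OF r(1)] by (simp add: mult.commute)
  have "int (\<alpha> j r * \<alpha> i 0) \<noteq> int (\<alpha> i r * \<alpha> j 0)"
    using primitive_system_independent_constants[OF prim i j ij r(2) rel] by (metis of_nat_eq_iff)
  then have D0: "int (\<alpha> j r * \<alpha> i 0) - int (\<alpha> i r * \<alpha> j 0) \<noteq> 0" by simp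
  have "\<not> int p dvd int (\<alpha> j r * \<alpha> i 0) - int (\<alpha> i r * \<alpha> j 0)"
    by (rule not_dvd_nonzero_smaller_diff[OF coeff_product_le_coeff_bound coeff_product_le_coeff_bound pW D0])
       (use i j r in auto)
  then have emp: "{n\<in>box l N. p dvd eval_form \<alpha> l i n \<and> p dvd eval_form \<alpha> l j n} = {}"
    by (intro box_dvd_two_forms_eq_empty[OF rel]) simp
  show ?thesis unfolding emp by simp
qed

lemma primitive_system_prime_for_independent_system:
  assumes prim: "primitive_system k l \<alpha>" and p: "prime p" and pW: "coeff_bound k l \<alpha> < p"
    and fb: "\<And>j \<mu>. j < k \<Longrightarrow> norm (f j (p ^ \<mu>)) \<le> 1" and f1: "\<And>j. j < k \<Longrightarrow> f j 1 = 1"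
  shows "prime_for_independent_system p k l \<alpha> f"
proof unfold_locales
  show "\<exists>r0\<in>{1..l}. \<not> p dvd \<alpha> j r0" if "j < k" for j
    by (rule primitive_system_coeff_not_dvd[OF prim that p])
  show "real (card {n\<in>box l N. p dvd eval_form \<alpha> l i n \<and> p dvd eval_form \<alpha> l j n})
        \<le> (1 / real p ^ 2) * real N ^ l + 3 * real N ^ (l - 1)"
    if "i < k" "j < k" "i \<noteq> j" "N \<ge> 1" for i j N
    by (rule primitive_system_card_box_dvd_two_forms_le[OF prim that(1-3) p pW that(4)])
qed (use p fb f1 in auto)

lemma sum_inverse_squares_telescope:
  fixes s M :: nat assumes "s \<ge> 1" "M \<ge> s"
  shows "(\<Sum>n\<in>{s<..M}. 1 / real n ^ 2) \<le> 1 / real s - 1 / real M"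
  using assms(2)
proof (induction M rule: nat_induct_at_least)
  case base then show ?case by simp
next
  case (Suc M)
  have M1: "M \<ge> 1" using Suc assms by simp
  have "{s<..Suc M} = insert (Suc M) {s<..M}" using Suc by auto
  then have "(\<Sum>n\<in>{s<..Suc M}. 1 / real n ^ 2) = 1 / real (Suc M) ^ 2 + (\<Sum>n\<in>{s<..M}. 1 / real n ^ 2)"
    by simp
  also have "\<dots> \<le> 1 / real (Suc M) ^ 2 + (1 / real s - 1 / real M)" using Suc by simp
  also have "1 / real (Suc M) ^ 2 \<le> 1 / real M - 1 / real (Suc M)"
  proof -
    have m0: "real M > 0" using M1 by simp
    have "1 / real M - 1 / real (Suc M) = 1 / (real M * real (Suc M))" using m0 by (simp add: field_simps)
    moreover have "real M * real (Suc M) \<le> real (Suc M) ^ 2" by (simp add: power2_eq_square)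
    then have "1 / real (Suc M) ^ 2 \<le> 1 / (real M * real (Suc M))"
      using m0 by (intro divide_left_mono) auto
    ultimately show ?thesis by simp
  qed
  finally show ?case by simp
qed

lemma sum_inverse_squares_le:
  fixes Q :: "nat set" and s :: nat
  assumes fQ: "finite Q" and Qs: "\<And>n. n \<in> Q \<Longrightarrow> n > s" and s: "s \<ge> 1"
  shows "(\<Sum>n\<in>Q. 1 / real n ^ 2) \<le> 1 / real s"
proof (cases "Q = {}")
  case True then show ?thesis by simp
next
  case False
  define M where "M = Max Q"
  have QM: "Q \<subseteq> {s<..M}" using Qs fQ unfolding M_def by (auto intro: Max_ge)
  have Ms: "M \<ge> s" using False Qs fQ unfolding M_def by (metis Max_in less_imp_le)
  have "(\<Sum>n\<in>Q. 1 / real n ^ 2) \<le> (\<Sum>n\<in>{s<..M}. 1 / real n ^ 2)"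
    by (rule sum_mono2[OF _ QM]) auto
  also have "\<dots> \<le> 1 / real s - 1 / real M" by (rule sum_inverse_squares_telescope[OF s Ms])
  also have "\<dots> \<le> 1 / real s" by simp
  finally show ?thesis .
qed

lemma sum_inverse_squares_gt_le:
  fixes P :: "nat set" and y :: real
  assumes fP: "finite P" and Py: "\<And>n. n \<in> P \<Longrightarrow> real n > y" and y: "y \<ge> 2"
  shows "(\<Sum>n\<in>P. 1 / real n ^ 2) \<le> 2 / y"
proof -
  define s where "s = nat \<lfloor>y\<rfloor>"
  have s: "s \<ge> 1" "real s > y - 1" "real s \<le> y" unfolding s_def using y by linarith+
  have "(\<Sum>n\<in>P. 1 / real n ^ 2) \<le> 1 / real s"
  proof (rule sum_inverse_squares_le[OF fP _ s(1)])
    fix n assume "n \<in> P"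
    then show "n > s" using Py s by fastforce
  qed
  also have "\<dots> \<le> 2 / y" using s y by (simp add: field_simps)
  finally show ?thesis .
qed

lemma sum_min_inverse_square_le:
  fixes Q :: "nat set" and y :: real
  assumes fQ: "finite Q" and Q1: "\<And>n. n \<in> Q \<Longrightarrow> n \<ge> 1" and y: "y \<ge> 4"
  shows "(\<Sum>n\<in>Q. min (1 / y) (1 / real n ^ 2)) \<le> 3 / sqrt y"
proof -
  define s where "s = nat \<lfloor>sqrt y\<rfloor>"
  have sy: "sqrt y \<ge> 2" using y by (metis real_sqrt_four real_sqrt_le_iff)
  have s1: "real s \<le> sqrt y" "sqrt y - 1 < real s" unfolding s_def using sy by linarith+
  have s2: "s \<ge> 1" using s1 sy by linarith
  have ss: "real s \<ge> sqrt y / 2" using s1 sy by linarith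
  define Q1 where "Q1 = {n\<in>Q. n \<le> s}"
  define Q2 where "Q2 = {n\<in>Q. n > s}"
  have split: "(\<Sum>n\<in>Q. min (1 / y) (1 / real n ^ 2)) = (\<Sum>n\<in>Q1. min (1 / y) (1 / real n ^ 2)) + (\<Sum>n\<in>Q2. min (1 / y) (1 / real n ^ 2))"
  proof -
    have "Q = Q1 \<union> Q2" "Q1 \<inter> Q2 = {}" unfolding Q1_def Q2_def by auto
    moreover have "finite Q1" "finite Q2" using fQ unfolding Q1_def Q2_def by auto
    ultimately show ?thesis by (metis sum.union_disjoint)
  qed
  have b1: "(\<Sum>n\<in>Q1. min (1 / y) (1 / real n ^ 2)) \<le> 1 / sqrt y"
  proof -
    have "(\<Sum>n\<in>Q1. min (1 / y) (1 / real n ^ 2)) \<le> (\<Sum>n\<in>Q1. 1 / y)" by (intro sum_mono) auto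
    also have "\<dots> = real (card Q1) / y" by simp
    also have "card Q1 \<le> card {1..s}" using Q1 unfolding Q1_def by (intro card_mono) auto
    then have "real (card Q1) \<le> real s" by simp
    then have "real (card Q1) / y \<le> sqrt y / y" using s1 y by (intro divide_right_mono) auto
    also have "sqrt y / y = 1 / sqrt y"
    proof -
      have yy: "sqrt y * sqrt y = y" using y by simp
      have sp: "sqrt y > 0" using sy by linarith
      have "sqrt y / y = sqrt y / (sqrt y * sqrt y)" by (simp only: yy)
      also have "\<dots> = 1 / sqrt y" using sp by (intro nonzero_divide_mult_cancel_left) simp
      finally show ?thesis .
    qed
    finally show ?thesis .
  qed
  have b2: "(\<Sum>n\<in>Q2. min (1 / y) (1 / real n ^ 2)) \<le> 2 / sqrt y"
  proof -
    have "(\<Sum>n\<in>Q2. min (1 / y) (1 / real n ^ 2)) \<le> (\<Sum>n\<in>Q2. 1 / real n ^ 2)" by (intro sum_mono) auto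
    also have "\<dots> \<le> 1 / real s" by (rule sum_inverse_squares_le) (use fQ s2 in \<open>auto simp: Q2_def\<close>)
    also have "\<dots> \<le> 1 / (sqrt y / 2)" using ss sy s2 y by (intro divide_left_mono mult_pos_pos) auto
    also have "\<dots> = 2 / sqrt y" by simp
    finally show ?thesis .
  qed
  show ?thesis using split b1 b2 by simp
qed

lemma inverse_sqrt_le_two_div_ln:
  fixes y :: real
  assumes y: "y > 1"
  shows "1 / sqrt y \<le> 2 / ln y"
proof -
  have sy: "sqrt y > 0" using y by simp
  have "ln (sqrt y) \<le> sqrt y - 1" by (rule ln_le_minus_one[OF sy])
  then have "ln y \<le> 2 * sqrt y" using y by (simp add: ln_sqrt)
  moreover have "ln y > 0" using y by simp
  ultimately show ?thesis using sy by (simp add: field_simps)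
qed

lemma error_terms_le_div_ln:
  fixes y a b :: real
  assumes y: "y \<ge> 4" and a: "a \<ge> 0" and b: "b \<ge> 0"
  shows "2 * (a / y + b / sqrt y) \<le> 4 * (a + b) / ln y"
proof -
  have sy: "sqrt y \<ge> 1" using y by simp
  then have "sqrt y * 1 \<le> sqrt y * sqrt y" by (intro mult_left_mono) auto
  then have "sqrt y \<le> y" using y by simp
  then have "a / y \<le> a / sqrt y" using a sy by (intro divide_left_mono) auto
  then have "2 * (a / y + b / sqrt y) \<le> 2 * (a / sqrt y + b / sqrt y)" by simp
  also have "\<dots> = 2 * (a + b) * (1 / sqrt y)" by (simp add: add_divide_distrib)
  also have "\<dots> \<le> 2 * (a + b) * (2 / ln y)"
    using a b y by (intro mult_left_mono inverse_sqrt_le_two_div_ln) auto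
  finally show ?thesis by simp
qed

section \<open>Products over primes\<close>

lemma prod_Pfrak_split:
  assumes "y \<le> X"
  shows "(\<Prod>j<k. Pfrak (f j) X) =
    (\<Prod>p\<in>{p. prime p \<and> real p \<le> y}. \<Prod>j<k. euler_factor (f j) p) *
    (\<Prod>p\<in>{p. prime p \<and> y < real p \<and> real p \<le> X}. \<Prod>j<k. euler_factor (f j) p)"
proof -
  define T where "T = {p. prime p \<and> real p \<le> X}"
  define Q where "Q = {p. prime p \<and> real p \<le> y}"
  define P where "P = {p. prime p \<and> y < real p \<and> real p \<le> X}"
  have fT: "finite T" unfolding T_def by (rule finite_subset[of _ "{..nat \<lfloor>X\<rfloor>}"]) (auto intro: le_nat_floor)
  have TQP: "T = Q \<union> P" "Q \<inter> P = {}" unfolding T_def Q_def P_def using assms by auto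
  have "(\<Prod>j<k. Pfrak (f j) X) = (\<Prod>j<k. \<Prod>p\<in>T. euler_factor (f j) p)"
    unfolding Pfrak_def euler_factor_def T_def ..
  also have "\<dots> = (\<Prod>p\<in>T. \<Prod>j<k. euler_factor (f j) p)" by (rule prod.swap)
  also have "\<dots> = (\<Prod>p\<in>Q. \<Prod>j<k. euler_factor (f j) p) * (\<Prod>p\<in>P. \<Prod>j<k. euler_factor (f j) p)"
    unfolding TQP(1) using fT TQP by (intro prod.union_disjoint) auto
  finally show ?thesis unfolding Q_def P_def .
qed

lemma prod_M_p_large_primes:
  assumes prim: "primitive_system k l \<alpha>"
    and yk: "y \<ge> 32 * (real k + 1) ^ 3" and yW: "y > real (coeff_bound k l \<alpha>)"
    and fb: "\<And>j p \<mu>. j < k \<Longrightarrow> prime p \<Longrightarrow> norm (f j (p ^ \<mu>)) \<le> 1"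
    and f1: "\<And>j. j < k \<Longrightarrow> f j 1 = 1"
  obtains A where
    "(\<Prod>p\<in>{p. prime p \<and> y < real p \<and> real p \<le> X}. M_p k l f \<alpha> p) =
       (\<Prod>p\<in>{p. prime p \<and> y < real p \<and> real p \<le> X}. \<Prod>j<k. euler_factor (f j) p) * A"
    and "norm (A - 1) \<le> 64 * (real k + 1) ^ 3 / y"
proof -
  define K :: real where "K = 16 * (real k + 1) ^ 3"
  define P where "P = {p. prime p \<and> y < real p \<and> real p \<le> X}"
  define a where "a p = (\<Prod>j<k. euler_factor (f j) p)" for p
  define \<delta> where "\<delta> p = M_p k l f \<alpha> p / a p - 1" for p
  have K0: "K \<ge> 0" unfolding K_def by simp
  have "real k + 1 \<le> (real k + 1) ^ 3" by (rule self_le_power) auto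
  then have y4: "y \<ge> 4" and y16: "y \<ge> 16 * real k" using yk by linarith+
  have fP: "finite P" unfolding P_def by (rule finite_subset[of _ "{..nat \<lfloor>X\<rfloor>}"]) (auto intro: le_nat_floor)
  have local: "norm (a p - 1) \<le> 1 / 2 \<and> norm (\<delta> p) \<le> K / real p ^ 2" if "p \<in> P" for p
  proof -
    have pr: "prime p" and py: "y < real p" using that unfolding P_def by auto
    interpret prime_for_independent_system p k l \<alpha> f
      using primitive_system_prime_for_independent_system[OF prim pr _ fb[OF _ pr] f1] py yW by simp
    have "real (16 * k) \<le> real p" using py y16 by simp
    then have "16 * k \<le> p" by (simp only: of_nat_le_iff)
    then show ?thesis
      using norm_euler_product_sub_one_le norm_M_p_div_euler_product_sub_one_le
      unfolding a_def \<delta>_def K_def by blast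
  qed
  have "(\<Prod>p\<in>P. M_p k l f \<alpha> p) = (\<Prod>p\<in>P. a p * (1 + \<delta> p))"
  proof (intro prod.cong refl)
    fix p assume "p \<in> P"
    then have "a p \<noteq> 0" using local[of p] by auto
    then show "M_p k l f \<alpha> p = a p * (1 + \<delta> p)" unfolding \<delta>_def by simp
  qed
  then have factor: "(\<Prod>p\<in>P. M_p k l f \<alpha> p) = (\<Prod>p\<in>P. a p) * (\<Prod>p\<in>P. 1 + \<delta> p)"
    by (simp add: prod.distrib)
  have "(\<Sum>p\<in>P. norm (\<delta> p)) \<le> K * (\<Sum>p\<in>P. 1 / real p ^ 2)"
    unfolding sum_distrib_left using local by (intro sum_mono) auto
  also have "\<dots> \<le> K * (2 / y)"
    using fP y4 K0 by (intro mult_left_mono sum_inverse_squares_gt_le) (auto simp: P_def)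
  finally have sum_\<delta>: "(\<Sum>p\<in>P. norm (\<delta> p)) \<le> 2 * K / y" by (simp add: mult.commute)
  moreover have "2 * K / y \<le> 1" using yk y4 unfolding K_def by (simp add: field_simps)
  ultimately have "norm ((\<Prod>p\<in>P. 1 + \<delta> p) - 1) \<le> 2 * (\<Sum>p\<in>P. norm (\<delta> p))"
    by (intro norm_prod_one_plus_sub_one_le[OF fP]) simp
  then have "norm ((\<Prod>p\<in>P. 1 + \<delta> p) - 1) \<le> 64 * (real k + 1) ^ 3 / y"
    using sum_\<delta> unfolding K_def by simp
  then show ?thesis using that factor unfolding P_def a_def by blast
qed

lemma norm_euler_product_small_primes_sub_one_le:
  assumes y4: "y \<ge> 4" and yk: "sqrt y \<ge> 48 * real k"
    and fb: "\<And>j p \<mu>. j < k \<Longrightarrow> prime p \<Longrightarrow> norm (f j (p ^ \<mu>)) \<le> 1"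
    and fsm: "\<And>j p \<mu>. j < k \<Longrightarrow> prime p \<Longrightarrow> \<mu> \<ge> 1 \<Longrightarrow> real (p ^ \<mu>) \<le> y \<Longrightarrow> f j (p ^ \<mu>) = 1"
  shows "norm ((\<Prod>p\<in>{p. prime p \<and> real p \<le> y}. \<Prod>j<k. euler_factor (f j) p) - 1) \<le> 24 * real k / sqrt y"
proof -
  define Q where "Q = {p. prime p \<and> real p \<le> y}"
  define z where "z pj = euler_factor (f (snd pj)) (fst pj) - 1" for pj
  have fQ: "finite Q" unfolding Q_def by (rule finite_subset[of _ "{..nat \<lfloor>y\<rfloor>}"]) (auto intro: le_nat_floor)
  have sy0: "sqrt y > 0" using y4 by simp
  have "(\<Sum>pj\<in>Q \<times> {..<k}. norm (z pj)) = (\<Sum>p\<in>Q. \<Sum>j<k. norm (euler_factor (f j) p - 1))"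
    unfolding z_def by (simp add: sum.cartesian_product case_prod_beta)
  also have "\<dots> \<le> (\<Sum>p\<in>Q. \<Sum>j<k. 4 * min (1 / y) (1 / real p ^ 2))"
    unfolding Q_def by (intro sum_mono norm_euler_factor_small_prime fb fsm) auto
  also have "\<dots> = 4 * real k * (\<Sum>p\<in>Q. min (1 / y) (1 / real p ^ 2))"
    by (simp add: sum_distrib_left mult.assoc mult.left_commute)
  also have "\<dots> \<le> 4 * real k * (3 / sqrt y)"
  proof (intro mult_left_mono sum_min_inverse_square_le[OF fQ _ y4])
    fix n assume "n \<in> Q" then show "n \<ge> 1" unfolding Q_def by (auto simp: prime_gt_0_nat Suc_le_eq)
  qed simp
  finally have sum_z: "(\<Sum>pj\<in>Q \<times> {..<k}. norm (z pj)) \<le> 12 * real k / sqrt y" by simp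
  moreover have "12 * real k / sqrt y \<le> 1" using yk sy0 by (simp add: field_simps)
  ultimately have "norm ((\<Prod>pj\<in>Q \<times> {..<k}. 1 + z pj) - 1) \<le> 2 * (\<Sum>pj\<in>Q \<times> {..<k}. norm (z pj))"
    using fQ by (intro norm_prod_one_plus_sub_one_le) auto
  moreover have "(\<Prod>pj\<in>Q \<times> {..<k}. 1 + z pj) = (\<Prod>p\<in>Q. \<Prod>j<k. euler_factor (f j) p)"
    unfolding z_def by (simp add: prod.cartesian_product case_prod_beta)
  ultimately show ?thesis using sum_z unfolding Q_def by simp
qed

lemma prod_M_p_eq_prod_Pfrak:
  assumes prim: "primitive_system k l \<alpha>"
    and yk: "y \<ge> 32 * (real k + 1) ^ 3" "sqrt y \<ge> 48 * real k" and yW: "y > real (coeff_bound k l \<alpha>)"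
    and Xy: "X \<ge> y"
    and f: "\<forall>j<k. multiplicative (f j) \<and> one_bounded (f j) \<and>
          (\<forall>p \<mu>. prime p \<longrightarrow> \<mu> \<ge> 1 \<longrightarrow> real (p ^ \<mu>) \<le> y \<longrightarrow> f j (p ^ \<mu>) = 1)"
  obtains \<theta> where "norm \<theta> \<le> (256 * (real k + 1) ^ 3 + 96 * real k) / ln y"
    and "(\<Prod>p\<in>{p. prime p \<and> y < real p \<and> real p \<le> X}. M_p k l f \<alpha> p) = (1 + \<theta>) * (\<Prod>j<k. Pfrak (f j) X)"
proof -
  have fb: "norm (f j (p ^ \<mu>)) \<le> 1" if "j < k" "prime p" for j p \<mu>
  proof -
    have "p > 0" using that(2) by (rule prime_gt_0_nat)
    then have "p ^ \<mu> \<ge> 1" by simp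
    then show ?thesis using f that(1) unfolding one_bounded_def by blast
  qed
  have f1: "f j 1 = 1" if "j < k" for j using f that unfolding multiplicative_def by blast
  have fsm: "\<And>j p \<mu>. j < k \<Longrightarrow> prime p \<Longrightarrow> \<mu> \<ge> 1 \<Longrightarrow> real (p ^ \<mu>) \<le> y \<Longrightarrow> f j (p ^ \<mu>) = 1"
    using f by blast
  have "real k + 1 \<le> (real k + 1) ^ 3" by (rule self_le_power) auto
  then have y4: "y \<ge> 4" using yk by linarith
  define B where "B = (\<Prod>p\<in>{p. prime p \<and> real p \<le> y}. \<Prod>j<k. euler_factor (f j) p)"
  obtain A where A: "(\<Prod>p\<in>{p. prime p \<and> y < real p \<and> real p \<le> X}. M_p k l f \<alpha> p) =
       (\<Prod>p\<in>{p. prime p \<and> y < real p \<and> real p \<le> X}. \<Prod>j<k. euler_factor (f j) p) * A"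
    and A1: "norm (A - 1) \<le> 64 * (real k + 1) ^ 3 / y"
    using prod_M_p_large_primes[where f = f and X = X, OF prim yk(1) yW fb f1] by blast
  have B1: "norm (B - 1) \<le> 24 * real k / sqrt y"
    unfolding B_def by (rule norm_euler_product_small_primes_sub_one_le[where f = f, OF y4 yk(2) fb fsm])
  have "24 * real k / sqrt y \<le> 1 / 2" using yk(2) y4 by (simp add: field_simps)
  then have B0: "norm (B - 1) \<le> 1 / 2" using B1 by linarith
  have "norm (A / B - 1) \<le> 2 * norm (A - B)" by (rule norm_divide_sub_one_le[OF B0])
  also have "\<dots> \<le> 2 * (64 * (real k + 1) ^ 3 / y + 24 * real k / sqrt y)"
    using A1 B1 norm_triangle_ineq4[of "A - 1" "B - 1"] by simp
  also have "\<dots> \<le> 4 * (64 * (real k + 1) ^ 3 + 24 * real k) / ln y"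
    using y4 by (intro error_terms_le_div_ln) auto
  finally have "norm (A / B - 1) \<le> (256 * (real k + 1) ^ 3 + 96 * real k) / ln y" by simp
  moreover have "B \<noteq> 0" using B0 by auto
  then have "(\<Prod>p\<in>{p. prime p \<and> y < real p \<and> real p \<le> X}. M_p k l f \<alpha> p) = (1 + (A / B - 1)) * (\<Prod>j<k. Pfrak (f j) X)"
    unfolding A prod_Pfrak_split[OF Xy] B_def[symmetric] by simp
  ultimately show ?thesis using that by blast
qed

theorem lemma2p4:
  fixes k :: nat
  shows "\<exists>C::real. \<forall>(l::nat) (\<alpha>::nat \<Rightarrow> nat \<Rightarrow> nat). primitive_system k l \<alpha> \<longrightarrow>
    (\<forall>\<epsilon>>0. \<exists>y0::real. \<forall>(y::real) (X::real) (f::nat \<Rightarrow> nat \<Rightarrow> complex).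
       y \<ge> y0 \<longrightarrow> y \<ge> 2 \<longrightarrow> X \<ge> y \<longrightarrow>
       (\<forall>j<k. multiplicative (f j) \<and> one_bounded (f j) \<and>
          (\<forall>p \<mu>. prime p \<longrightarrow> \<mu> \<ge> 1 \<longrightarrow> real (p ^ \<mu>) \<le> y \<longrightarrow> f j (p ^ \<mu>) = 1)) \<longrightarrow>
       (\<exists>\<theta> E :: complex. norm \<theta> \<le> C / ln y \<and> norm E \<le> y powr (-1 + \<epsilon>) \<and>
          (\<Prod>p\<in>{p. prime p \<and> y < real p \<and> real p \<le> X}. M_p k l f \<alpha> p)
            = (1 + \<theta>) * ((\<Prod>j<k. Pfrak (f j) X) + E)))"
proof (rule exI[of _ "256 * (real k + 1) ^ 3 + 96 * real k"], intro allI impI, goal_cases)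
  case (1 l \<alpha> \<epsilon>)
  show ?case
  proof (rule exI[of _ "max (32 * (real k + 1) ^ 3) (max ((48 * real k) ^ 2) (real (coeff_bound k l \<alpha>) + 1))"],
      intro allI impI, goal_cases)
    case (1 y X f)
    then have y: "y \<ge> 32 * (real k + 1) ^ 3" "(48 * real k) ^ 2 \<le> y" "y > real (coeff_bound k l \<alpha>)"
      by auto
    then have "sqrt y \<ge> 48 * real k" by (intro real_le_rsqrt)
    then obtain \<theta> where "norm \<theta> \<le> (256 * (real k + 1) ^ 3 + 96 * real k) / ln y"
      "(\<Prod>p\<in>{p. prime p \<and> y < real p \<and> real p \<le> X}. M_p k l f \<alpha> p) = (1 + \<theta>) * (\<Prod>j<k. Pfrak (f j) X)"
      using prod_M_p_eq_prod_Pfrak[OF \<open>primitive_system k l \<alpha>\<close> y(1) _ y(3)] 1 by blast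
    then show ?case by (intro exI[of _ \<theta>] exI[of _ 0]) simp
  qed
qed

end
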